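(* Let $d,T,T_{\mathrm{off}}$ be positive integers and $v\in[0,1]^d$ with $\sum_{i=1}^dv_i\le1$. Then the minimax regret of the problem class $\mathcal{P}^d_{v,T_{\mathrm{off}},T}$ (defined in the context) satisfies $$\mathcal{R}_{\mathrm{minmax}}(\mathcal{P}^d_{v,T_{\mathrm{off}},T})\ge\frac{\sqrt{T}e^{-2}}{8}\sup_{\substack{w\in\Delta_d\\ w_i\ge v_i\ \forall i}}\sum_{i=1}^d\frac{1}{\sqrt{1+\frac{T_{\mathrm{off}}}{T}\frac{v_i}{w_i}}},$$ where $\Delta_d$ is the probability simplex in $\mathbb{R}^d$.
   Context: A problem instance is $p=(\pi_{\mathrm{off}},\mathcal{A},\theta,T_{\mathrm{off}},T)$ with $\mathcal{A}\subset\mathbb{R}^d$ finite, $\pi_{\mathrm{off}}$ a probability measure on $\mathcal{A}$, $\theta\in\mathbb{R}^d$: pulling arm $a$ gives reward $\langle\theta,a\rangle$ plus independent zero-mean $1$-sub-Gaussian noise; the learner receives $T_{\mathrm{off}}$ offline samples collected non-adaptively with $\pi_{\mathrm{off}}(a)T_{\mathrm{off}}$ samples from arm $a$, then plays $T$ online rounds $a_1,\dots,a_T$. The regret of algorithm $S$ on $p$ is $\mathcal{R}_p(T,S)=T\max_{a\in\mathcal{A}}\langle\theta,a\rangle-\sum_{t=1}^T\mathbb{E}[\langle\theta,a_t\rangle]$ (expectation over offline and online noise and the algorithm's randomness). With $V_{\pi_{\mathrm{off}}}=\sum_a\pi_{\mathrm{off}}(a)aa^\top$ and $\lambda_i$ its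 $i$-th smallest eigenvalue, the class $\mathcal{P}^d_{v,T_{\mathrm{off}},T}$ consists of all instances in dimension $d$ with the given $T_{\mathrm{off}},T$, with $|\mathcal{A}|\le(2d)^d$, and with $\lambda_i(V_{\pi_{\mathrm{off}}})/\max_{a\in\mathcal{A}}\|a\|^2=v_i$ for all $i\in[d]$. The minimax regret is $\mathcal{R}_{\mathrm{minmax}}(\mathcal{P}^d_{v,T_{\mathrm{off}},T})=\inf_{S}\sup_{p\in\mathcal{P}^d_{v,T_{\mathrm{off}},T}}\mathcal{R}_p(T,S)$, the infimum over all (possibly adaptive) algorithms for horizon $T$ that take the $T_{\mathrm{off}}$ offline samples as input. *)

theory Defs
  imports "HOL-Probability.Probability" "HOL-Computational_Algebra.Polynomial"
begin

type_synonym 'd arm = "real ^ ('d::finite)"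

text \<open>History: list of (arm, observed reward) pairs.  The first entries are the
  offline samples (in a fixed order), the remaining ones the online rounds.\<close>
type_synonym 'd hist = "('d arm \<times> real) list"

type_synonym 'd alg = "'d arm set \<Rightarrow> 'd hist \<Rightarrow> 'd arm pmf"

text \<open>Noise: standard Gaussian (a zero-mean 1-sub-Gaussian distribution).\<close>
definition noise :: "real measure" where
  "noise = density lborel std_normal_density"

text \<open>Expected cumulative online reward.  Forced arms \<open>bs\<close> are the offline samples
  still to be drawn (no reward counted), \<open>k\<close> is the number of online rounds left.\<close>
fun exp_reward :: "('d::finite) alg \<Rightarrow> 'd arm set \<Rightarrow> 'd arm \<Rightarrow> 'd arm list \<Rightarrow> nat \<Rightarrow> 'd hist \<Rightarrow> real" where
  "exp_reward S A \<theta> [] 0 h = 0"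
| "exp_reward S A \<theta> [] (Suc k) h =
     measure_pmf.expectation (S A h)
       (\<lambda>a. \<theta> \<bullet> a + (\<integral>y. exp_reward S A \<theta> [] k (h @ [(a, \<theta> \<bullet> a + y)]) \<partial>noise))"
| "exp_reward S A \<theta> (b # bs) k h =
     (\<integral>y. exp_reward S A \<theta> bs k (h @ [(b, \<theta> \<bullet> b + y)]) \<partial>noise)"

definition offline_arms :: "('d::finite) arm set \<Rightarrow> ('d arm \<Rightarrow> real) \<Rightarrow> nat \<Rightarrow> 'd arm list" where
  "offline_arms A \<pi> Toff =
     (SOME xs. \<forall>a. count (mset xs) a = (if a \<in> A then nat \<lfloor>\<pi> a * real Toff\<rfloor> else 0))"

definition regret :: "('d::finite) arm set \<Rightarrow> ('d arm \<Rightarrow> real) \<Rightarrow> 'd arm \<Rightarrow> nat \<Rightarrow> nat \<Rightarrow> 'd alg \<Rightarrow> real" where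
  "regret A \<pi> \<theta> Toff T S =
     real T * Max ((\<lambda>a. \<theta> \<bullet> a) ` A) - exp_reward S A \<theta> (offline_arms A \<pi> Toff) T []"

text \<open>Admissible algorithms: they only play arms of the action set and are
  measurable (so that the expectations are genuine expectations).\<close>
definition admissible :: "('d::finite) alg \<Rightarrow> bool" where
  "admissible S \<longleftrightarrow>
     (\<forall>A h. finite A \<and> A \<noteq> {} \<longrightarrow> set_pmf (S A h) \<subseteq> A) \<and>
     (\<forall>A \<theta> bs k h b. finite A \<and> A \<noteq> {} \<longrightarrow>
        (\<lambda>y. exp_reward S A \<theta> bs k (h @ [(b, \<theta> \<bullet> b + y)])) \<in> borel_measurable borel)"

definition cov_matrix :: "('d::finite) arm set \<Rightarrow> ('d arm \<Rightarrow> real) \<Rightarrow> real ^ 'd ^ 'd" where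
  "cov_matrix A \<pi> = (\<chi> i j. \<Sum>a\<in>A. \<pi> a * (a $ i) * (a $ j))"

definition char_poly :: "real ^ ('d::finite) ^ 'd \<Rightarrow> real poly" where
  "char_poly M = det (\<chi> i j. (if i = j then [:0, 1:] else 0) - [:M $ i $ j:])"

text \<open>Eigenvalues counted with algebraic multiplicity, in increasing order
  (index 0 = smallest).\<close>
definition sorted_eigenvalues :: "real ^ ('d::finite) ^ 'd \<Rightarrow> real list" where
  "sorted_eigenvalues M = sorted_list_of_multiset (proots (char_poly M))"

definition in_class :: "nat \<Rightarrow> (nat \<Rightarrow> real) \<Rightarrow> ('d::finite) arm set \<Rightarrow> ('d arm \<Rightarrow> real) \<Rightarrow> 'd arm \<Rightarrow> bool" where
  "in_class Toff v A \<pi> \<theta> \<longleftrightarrow>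
     finite A \<and> A \<noteq> {} \<and> card A \<le> (2 * CARD('d)) ^ CARD('d) \<and>
     (\<forall>a. 0 \<le> \<pi> a) \<and> (\<forall>a. a \<notin> A \<longrightarrow> \<pi> a = 0) \<and> (\<Sum>a\<in>A. \<pi> a) = 1 \<and>
     (\<forall>i < CARD('d). sorted_eigenvalues (cov_matrix A \<pi>) ! i / Max ((\<lambda>a. (norm a)\<^sup>2) ` A) = v i)"

definition minimax_regret :: "('d::finite) itself \<Rightarrow> (nat \<Rightarrow> real) \<Rightarrow> nat \<Rightarrow> nat \<Rightarrow> ereal" where
  "minimax_regret _ v Toff T =
     (INF S \<in> {S :: 'd alg. admissible S}.
        SUP p \<in> {(A, \<pi>, \<theta>). in_class Toff v A \<pi> \<theta>}.
          ereal (regret (fst p) (fst (snd p)) (snd (snd p)) Toff T S))"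

end

(*
  Fix an algorithm and a hypercube of parameters theta_sigma.  For nonnegative weights l on
  the cube, the flip potential of bit i sums, over the pairs {sigma, sigma with bit i
  switched off}, the parallel sum l l' / (l + l') of their weights.  It is at most the
  smaller weight, so a round in which the two parameters of every such pair disagree on the
  best arm by g_i costs at least g_i times the potential.  Conditioning on a Gaussian
  observation multiplies the weights by the likelihoods, which shrinks the potential by at
  most an affinity factor rho = 1 - O(delta^2), delta the difference of the two means.
  Induction over the offline samples and the T rounds shows that the regret averaged over
  the cube is at least sum_i g_i (1 + rho_i + ... + rho_i^(T-1)) rho_i^(n_i) / 4, where n_i
  counts the offline samples that are informative about bit i.

  On the arms {-s_i, 0, s_i}^d with s_i = sqrt w_i, coordinate i being nonzero with
  probability v_i / w_i, the covariance has eigenvalues v_i and the largest squared norm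
  is 1.  The gaps delta_i = 1 / (2 sqrt (T + T_off v_i / w_i)) keep rho_i^(T + n_i) above
  exp (-1/2) and give the bound.  For d = 1, where the box would exceed the (2d)^d arms
  allowed, the arms {0, e_1} serve instead; and if v_1 = 0 the unobserved direction makes
  the regret unbounded.
*)

theory Submission
  imports Defs
begin

section \<open>Parallel sums and the Gaussian affinity\<close>

definition parallel_sum :: "real \<Rightarrow> real \<Rightarrow> real" where
  "parallel_sum x y = x * y / (x + y)"

lemma parallel_sum_nonneg: "0 \<le> x \<Longrightarrow> 0 \<le> y \<Longrightarrow> 0 \<le> parallel_sum x y"
  by (simp add: parallel_sum_def)

lemma parallel_sum_le_min:
  assumes "0 \<le> x" "0 \<le> y"
  shows "parallel_sum x y \<le> min x y"
proof (cases "x + y = 0")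
  case False
  with assms have "x * y \<le> x * (x + y)" "x * y \<le> y * (x + y)" and "0 < x + y"
    by (simp_all add: algebra_simps)
  then show ?thesis by (simp add: parallel_sum_def divide_le_eq)
qed (use assms in \<open>simp add: parallel_sum_def\<close>)

lemma parallel_sum_const_one [simp]: "parallel_sum 1 1 = 1 / 2"
  by (simp add: parallel_sum_def)

lemma borel_measurable_parallel_sum [measurable]:
  fixes f g :: "'a \<Rightarrow> real"
  assumes [measurable]: "f \<in> borel_measurable M" "g \<in> borel_measurable M"
  shows "(\<lambda>z. parallel_sum (f z) (g z)) \<in> borel_measurable M"
  unfolding parallel_sum_def by measurable

text \<open>With \<open>m = w1 * q + w2 * p\<close> one has \<open>m * (w1 / q + w2 / p) = 1 + t\<close> for
  \<open>t = w1 * w2 * (p - q)\<^sup>2 / (p * q)\<close>, and \<open>1 / (1 + t) \<ge> 1 - t\<close>.\<close>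
lemma inverse_weighted_mean_ge:
  fixes w1 w2 p q :: real
  assumes w: "0 \<le> w1" "0 \<le> w2" "w1 + w2 = 1" and pq: "0 < p" "0 < q"
  shows "w1 * q + w2 * p - (q\<^sup>2 / p + p\<^sup>2 / q - p - q) / 4 \<le> 1 / (w1 / q + w2 / p)"
proof -
  define m where "m = w1 * q + w2 * p"
  define t where "t = w1 * w2 * (p - q)\<^sup>2 / (p * q)"
  have "w1 * q \<le> q" "w2 * p \<le> p"
    using w pq by (simp_all add: mult_left_le_one_le)
  then have m: "0 \<le> m" "m \<le> p + q"
    using w pq unfolding m_def by (simp, linarith)
  have t: "0 \<le> t" using w pq by (simp add: t_def)
  have "m * (w1 / q + w2 / p) = (w1 + w2)\<^sup>2 + t"
    using pq by (simp add: m_def t_def field_simps power2_eq_square)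
  moreover have "0 < w1 / q + w2 / p"
    using w pq by (cases "w1 = 0") (auto intro: add_pos_nonneg)
  ultimately have inv: "1 / (w1 / q + w2 / p) = m / (1 + t)"
    using w t by (simp add: field_simps)
  have "m - m * t \<le> m / (1 + t)"
    using m t by (simp add: field_simps mult_nonneg_nonneg)
  moreover have "m * t \<le> (q\<^sup>2 / p + p\<^sup>2 / q - p - q) / 4"
  proof -
    have "4 * (w1 * w2) \<le> (w1 + w2)\<^sup>2"
      using zero_le_power2[of "w1 - w2"] by (simp add: power2_eq_square algebra_simps)
    then have "w1 * w2 \<le> 1 / 4" using w by simp
    then have "m * (w1 * w2) \<le> (p + q) * (1 / 4)"
      using m w by (intro mult_mono) auto
    then have "m * (w1 * w2) * ((p - q)\<^sup>2 / (p * q)) \<le> (p + q) * (1 / 4) * ((p - q)\<^sup>2 / (p * q))"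
      using pq by (intro mult_right_mono) auto
    then have "m * t \<le> (p + q) * (1 / 4) * ((p - q)\<^sup>2 / (p * q))"
      by (simp add: t_def mult.assoc)
    also have "\<dots> = (q\<^sup>2 / p + p\<^sup>2 / q - p - q) / 4"
      using pq by (simp add: field_simps power2_eq_square)
    finally show ?thesis .
  qed
  ultimately show ?thesis unfolding inv m_def by linarith
qed

lemma parallel_sum_mult_ge:
  fixes x y p q :: real
  assumes xy: "0 \<le> x" "0 \<le> y" and pq: "0 < p" "0 < q"
  shows "parallel_sum x y * ((x * q + y * p) / (x + y) - (q\<^sup>2 / p + p\<^sup>2 / q - p - q) / 4)
           \<le> parallel_sum (x * p) (y * q)"
proof (cases "x + y = 0")
  case False
  with xy have s: "0 < x + y" by linarith
  with xy pq have "0 < x * p + y * q"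
    by (cases "x = 0") (auto intro: add_pos_nonneg)
  moreover have "x / n / q + y / n / p = (x * p + y * q) / (n * (p * q))" if "n \<noteq> 0" for n
    using that pq by (simp add: field_simps)
  ultimately have eq: "parallel_sum (x * p) (y * q) = parallel_sum x y * (1 / (x / (x + y) / q + y / (x + y) / p))"
    using s pq by (simp add: parallel_sum_def)
  have "x / (x + y) + y / (x + y) = 1"
    using s by (simp add: add_divide_distrib[symmetric])
  then have "(x * q + y * p) / (x + y) - (q\<^sup>2 / p + p\<^sup>2 / q - p - q) / 4
      \<le> 1 / (x / (x + y) / q + y / (x + y) / p)"
    using inverse_weighted_mean_ge[of "x / (x + y)" "y / (x + y)" p q] xy pq
    by (simp add: add_divide_distrib)
  from mult_left_mono[OF this parallel_sum_nonneg[OF xy]] show ?thesis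
    unfolding eq .
qed (use xy in \<open>simp add: parallel_sum_def add_nonneg_eq_0_iff\<close>)

definition gauss_affinity :: "real \<Rightarrow> real" where
  "gauss_affinity d = max 0 ((3 - exp (d\<^sup>2)) / 2)"

lemma normal_density_sq_divide:
  "(normal_density \<mu>' 1 z)\<^sup>2 / normal_density \<mu> 1 z
     = exp ((\<mu> - \<mu>')\<^sup>2) * normal_density (2 * \<mu>' - \<mu>) 1 z"
proof -
  have "2 * (-(z - \<mu>')\<^sup>2 / 2) - (-(z - \<mu>)\<^sup>2 / 2) = (\<mu> - \<mu>')\<^sup>2 + (-(z - (2 * \<mu>' - \<mu>))\<^sup>2 / 2)"
    by (simp add: power2_eq_square field_simps)
  then have "exp (-(z - \<mu>')\<^sup>2 / 2) ^ 2 / exp (-(z - \<mu>)\<^sup>2 / 2)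
      = exp ((\<mu> - \<mu>')\<^sup>2) * exp (-(z - (2 * \<mu>' - \<mu>))\<^sup>2 / 2)"
    by (simp add: exp_diff[symmetric] exp_add[symmetric] exp_of_nat_mult[symmetric])
  then show ?thesis
    by (simp add: normal_density_def power2_eq_square field_simps)
qed

lemma integrable_parallel_sum_normal:
  assumes "0 \<le> x" "0 \<le> y"
  shows "integrable lborel (\<lambda>z. parallel_sum (x * normal_density \<mu> 1 z) (y * normal_density \<mu>' 1 z))"
proof (rule Bochner_Integration.integrable_bound)
  show "integrable lborel (\<lambda>z. x * normal_density \<mu> 1 z)" by simp
  show "AE z in lborel. norm (parallel_sum (x * normal_density \<mu> 1 z) (y * normal_density \<mu>' 1 z))
      \<le> norm (x * normal_density \<mu> 1 z)"
    using parallel_sum_le_min parallel_sum_nonneg assms by (intro AE_I2) (simp add: min.coboundedI1)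
qed measurable

text \<open>Integrate \<open>parallel_sum_mult_ge\<close> with \<open>p\<close>, \<open>q\<close> the two densities: as the integral of
  \<open>q\<^sup>2 / p\<close> is \<open>exp ((\<mu> - \<mu>')\<^sup>2)\<close>, the correction term integrates to \<open>(exp ((\<mu> - \<mu>')\<^sup>2) - 1) / 2\<close>.\<close>
lemma gauss_affinity_le_integral:
  assumes xy: "0 \<le> x" "0 \<le> y"
  shows "gauss_affinity (\<mu> - \<mu>') * parallel_sum x y
           \<le> (\<integral>z. parallel_sum (x * normal_density \<mu> 1 z) (y * normal_density \<mu>' 1 z) \<partial>lborel)"
    (is "_ \<le> integral\<^sup>L lborel ?F")
proof -
  have F_nonneg: "0 \<le> integral\<^sup>L lborel ?F"
    using xy by (simp add: parallel_sum_nonneg)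
  have "parallel_sum x y * ((3 - exp ((\<mu> - \<mu>')\<^sup>2)) / 2) \<le> integral\<^sup>L lborel ?F"
  proof (cases "x + y = 0")
    case False
    with xy have s: "0 < x + y" by linarith
    define E where "E = exp ((\<mu> - \<mu>')\<^sup>2)"
    let ?p = "normal_density \<mu> 1" and ?q = "normal_density \<mu>' 1"
    define L where "L z = parallel_sum x y * (x / (x + y) * ?q z + y / (x + y) * ?p z
         - (E * normal_density (2 * \<mu>' - \<mu>) 1 z + E * normal_density (2 * \<mu> - \<mu>') 1 z - ?p z - ?q z) / 4)"
      for z
    have L: "has_bochner_integral lborel L
        (parallel_sum x y * (x / (x + y) * 1 + y / (x + y) * 1 - (E * 1 + E * 1 - 1 - 1) / 4))"
      unfolding L_def
      by (intro has_bochner_integral_mult_right has_bochner_integral_add has_bochner_integral_diff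
            has_bochner_integral_divide_zero) (simp_all add: has_bochner_integral_iff)
    have "integral\<^sup>L lborel L \<le> integral\<^sup>L lborel ?F"
    proof (rule integral_mono)
      fix z
      have "?p z > 0" "?q z > 0" by (simp_all add: normal_density_pos)
      then show "L z \<le> ?F z"
        using parallel_sum_mult_ge[OF xy, of "?p z" "?q z"]
          normal_density_sq_divide[of \<mu>' z \<mu>] normal_density_sq_divide[of \<mu> z \<mu>']
        by (simp add: L_def E_def power2_commute add_divide_distrib)
    qed (use integrable.intros[OF L] integrable_parallel_sum_normal[OF xy] in auto)
    moreover have "x / (x + y) + y / (x + y) = 1"
      using s by (simp add: add_divide_distrib[symmetric])
    ultimately show ?thesis
      using has_bochner_integral_integral_eq[OF L] by (simp add: E_def field_simps)
  qed (use F_nonneg xy in \<open>simp add: parallel_sum_def\<close>)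
  with F_nonneg show ?thesis
    by (simp add: gauss_affinity_def max_def mult.commute)
qed

lemma gauss_affinity_nonneg: "0 \<le> gauss_affinity d"
  by (simp add: gauss_affinity_def)

lemma gauss_affinity_le_one: "gauss_affinity d \<le> 1"
  using one_le_exp_iff[of "d\<^sup>2"] by (simp add: gauss_affinity_def)

lemma gauss_affinity_zero [simp]: "gauss_affinity 0 = 1"
  by (simp add: gauss_affinity_def)

lemma gauss_affinity_minus [simp]: "gauss_affinity (- d) = gauss_affinity d"
  by (simp add: gauss_affinity_def)

lemma exp_le_gauss_affinity:
  assumes "d\<^sup>2 \<le> 1 / 2"
  shows "exp (- 2 * d\<^sup>2) \<le> gauss_affinity d"
proof -
  let ?u = "d\<^sup>2"
  have "- 2 * ?u \<le> - ?u - 2 * ?u\<^sup>2"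
    using mult_left_mono[OF assms, of ?u] by (simp add: power2_eq_square)
  also have "\<dots> \<le> ln (1 - ?u)"
    using assms by (intro ln_one_minus_pos_lower_bound) auto
  finally have "exp (- 2 * ?u) \<le> exp (ln (1 - ?u))"
    by simp
  also have "\<dots> = 1 - ?u"
    using assms by simp
  also have "\<dots> \<le> (3 - exp ?u) / 2"
    using exp_bound_lemma[of ?u] assms by simp
  finally show ?thesis
    unfolding gauss_affinity_def by linarith
qed

section \<open>Expected rewards and offline samples\<close>

lemma prob_space_noise: "prob_space noise"
  unfolding noise_def using prob_space_normal_density[of 1 0] by simp

lemma (in prob_space) abs_integral_le_const:
  fixes f :: "'a \<Rightarrow> real"
  assumes "\<And>x. \<bar>f x\<bar> \<le> C"
  shows "\<bar>integral\<^sup>L M f\<bar> \<le> C"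
proof (cases "integrable M f")
  case True
  have "\<bar>integral\<^sup>L M f\<bar> \<le> integral\<^sup>L M (\<lambda>x. \<bar>f x\<bar>)"
    by (rule integral_abs_bound)
  also have "\<dots> \<le> C"
    using True assms by (intro integral_le_const) auto
  finally show ?thesis .
qed (use assms[of undefined] in \<open>simp add: not_integrable_integral_eq\<close>)

lemma integral_noise_shift:
  fixes F :: "real \<Rightarrow> real"
  assumes "(\<lambda>y. F (c + y)) \<in> borel_measurable borel"
  shows "(\<integral>y. F (c + y) \<partial>noise) = (\<integral>z. normal_density c 1 z * F z \<partial>lborel)"
proof -
  have "(\<integral>y. F (c + y) \<partial>noise) = (\<integral>y. normal_density c 1 (c + 1 * y) * F (c + 1 * y) \<partial>lborel)"
    unfolding noise_def using assms by (subst integral_density) (auto simp: normal_density_def)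
  also have "\<dots> = (\<integral>z. normal_density c 1 z * F z \<partial>lborel)"
    using lborel_integral_real_affine[of 1 "\<lambda>z. normal_density c 1 z * F z" c] by simp
  finally show ?thesis .
qed

lemma admissible_set_pmf:
  "admissible S \<Longrightarrow> finite A \<Longrightarrow> A \<noteq> {} \<Longrightarrow> set_pmf (S A h) \<subseteq> A"
  unfolding admissible_def by auto

lemma admissible_measurable:
  "admissible S \<Longrightarrow> finite A \<Longrightarrow> A \<noteq> {} \<Longrightarrow>
    (\<lambda>y. exp_reward S A \<theta> bs k (h @ [(b, \<theta> \<bullet> b + y)])) \<in> borel_measurable borel"
  unfolding admissible_def by auto

lemma admissible_measurable_observation:
  assumes "admissible S" "finite A" "A \<noteq> {}"
  shows "(\<lambda>z. exp_reward S A \<theta> bs k (h @ [(b, z)])) \<in> borel_measurable borel"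
  using measurable_compose[OF _ admissible_measurable[OF assms, of \<theta> bs k h b], of "\<lambda>z. z - \<theta> \<bullet> b"]
  by simp

lemma expectation_admissible:
  assumes "admissible S" "finite A" "A \<noteq> {}"
  shows "measure_pmf.expectation (S A h) f = (\<Sum>a\<in>A. pmf (S A h) a * f a)"
  using integral_measure_pmf[OF assms(2), of "S A h" f] admissible_set_pmf[OF assms, of h] by auto

lemma sum_pmf_admissible:
  assumes "admissible S" "finite A" "A \<noteq> {}"
  shows "(\<Sum>a\<in>A. pmf (S A h) a) = 1"
  by (rule sum_pmf_eq_1[OF assms(2) admissible_set_pmf[OF assms]])

lemma exp_reward_observation:
  assumes "admissible S" "finite A" "A \<noteq> {}"
  shows "(\<integral>y. exp_reward S A \<theta> bs k (h @ [(b, \<theta> \<bullet> b + y)]) \<partial>noise)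
      = (\<integral>z. normal_density (\<theta> \<bullet> b) 1 z * exp_reward S A \<theta> bs k (h @ [(b, z)]) \<partial>lborel)"
  using integral_noise_shift[OF admissible_measurable[OF assms]] by simp

definition max_reward :: "'d::finite arm set \<Rightarrow> 'd arm \<Rightarrow> real" where
  "max_reward A \<theta> = Max ((\<lambda>a. \<theta> \<bullet> a) ` A)"

definition max_abs_reward :: "'d::finite arm set \<Rightarrow> 'd arm \<Rightarrow> real" where
  "max_abs_reward A \<theta> = Max ((\<lambda>a. \<bar>\<theta> \<bullet> a\<bar>) ` A)"

lemma abs_reward_le_max_abs_reward: "finite A \<Longrightarrow> a \<in> A \<Longrightarrow> \<bar>\<theta> \<bullet> a\<bar> \<le> max_abs_reward A \<theta>"
  unfolding max_abs_reward_def by (rule Max_ge) auto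

lemma max_abs_reward_nonneg: "finite A \<Longrightarrow> A \<noteq> {} \<Longrightarrow> 0 \<le> max_abs_reward A \<theta>"
  using abs_reward_le_max_abs_reward[of A _ \<theta>] by (meson abs_ge_zero ex_in_conv order_trans)

lemma abs_exp_reward_online_le:
  assumes adm: "admissible S" and A: "finite A" "A \<noteq> {}"
  shows "\<bar>exp_reward S A \<theta> [] k h\<bar> \<le> real k * max_abs_reward A \<theta>"
proof (induction k arbitrary: h)
  case (Suc k)
  let ?J = "\<lambda>a. \<integral>y. exp_reward S A \<theta> [] k (h @ [(a, \<theta> \<bullet> a + y)]) \<partial>noise"
  have J: "\<bar>?J a\<bar> \<le> real k * max_abs_reward A \<theta>" for a
    by (rule prob_space.abs_integral_le_const[OF prob_space_noise]) (rule Suc.IH)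
  have "\<bar>\<theta> \<bullet> a + ?J a\<bar> \<le> real (Suc k) * max_abs_reward A \<theta>" if "a \<in> A" for a
    using abs_reward_le_max_abs_reward[OF A(1) that, of \<theta>] J[of a] by (simp add: algebra_simps)
  then have "\<bar>\<Sum>a\<in>A. pmf (S A h) a * (\<theta> \<bullet> a + ?J a)\<bar> \<le> (\<Sum>a\<in>A. pmf (S A h) a * (real (Suc k) * max_abs_reward A \<theta>))"
    by (intro order_trans[OF sum_abs] sum_mono) (simp add: abs_mult mult_left_mono)
  then show ?case
    by (simp add: expectation_admissible[OF adm A] sum_distrib_right[symmetric] sum_pmf_admissible[OF adm A])
qed simp

lemma abs_exp_reward_le:
  assumes "admissible S" "finite A" "A \<noteq> {}"
  shows "\<bar>exp_reward S A \<theta> bs k h\<bar> \<le> real k * max_abs_reward A \<theta>"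
proof (induction bs arbitrary: h)
  case Nil
  show ?case by (rule abs_exp_reward_online_le[OF assms])
next
  case (Cons b bs)
  show ?case
    unfolding exp_reward.simps by (rule prob_space.abs_integral_le_const[OF prob_space_noise], rule Cons.IH)
qed

lemma count_offline_arms:
  assumes "finite A"
  shows "count (mset (offline_arms A \<pi> Toff)) a = (if a \<in> A then nat \<lfloor>\<pi> a * real Toff\<rfloor> else 0)"
proof -
  define M where "M = (\<Sum>b\<in>A. replicate_mset (nat \<lfloor>\<pi> b * real Toff\<rfloor>) b)"
  obtain xs where xs: "mset xs = M"
    using ex_mset by blast
  have "count M a = (if a \<in> A then nat \<lfloor>\<pi> a * real Toff\<rfloor> else 0)" for a
    using assms by (simp add: M_def count_sum count_replicate_mset if_distrib sum.delta' cong: if_cong)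
  then have "\<exists>xs. \<forall>a. count (mset xs) a = (if a \<in> A then nat \<lfloor>\<pi> a * real Toff\<rfloor> else 0)"
    by (intro exI[of _ xs]) (simp add: xs)
  then show ?thesis
    unfolding offline_arms_def by (rule someI_ex[THEN spec])
qed

lemma set_offline_arms:
  assumes "finite A"
  shows "set (offline_arms A \<pi> Toff) \<subseteq> A"
proof
  fix a
  assume "a \<in> set (offline_arms A \<pi> Toff)"
  then have "0 < count (mset (offline_arms A \<pi> Toff)) a"
    by simp
  then show "a \<in> A"
    unfolding count_offline_arms[OF assms] by (simp split: if_splits)
qed

lemma length_filter_offline_arms_le:
  assumes A: "finite A" and \<pi>: "\<And>a. 0 \<le> \<pi> a"
  shows "real (length (filter P (offline_arms A \<pi> Toff))) \<le> real Toff * (\<Sum>a\<in>{a\<in>A. P a}. \<pi> a)"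
proof -
  let ?xs = "offline_arms A \<pi> Toff"
  have "length (filter P xs) = sum_list (map (\<lambda>b. if P b then 1 else 0) xs)" for xs
    by (induction xs) auto
  then have "real (length (filter P ?xs)) = (\<Sum>a\<in>A. real (count (mset ?xs) a) * (if P a then 1 else 0))"
    by (simp add: sum_list_map_eq_sum_count2[OF set_offline_arms[OF A] A] count_mset)
      (auto intro!: sum.cong)
  also have "\<dots> \<le> (\<Sum>a\<in>A. \<pi> a * real Toff * (if P a then 1 else 0))"
    using \<pi> by (intro sum_mono) (simp add: count_offline_arms[OF A] of_nat_nat)
  also have "\<dots> = real Toff * (\<Sum>a\<in>A. if P a then \<pi> a else 0)"
    by (auto simp: sum_distrib_left mult.commute intro!: sum.cong)
  also have "\<dots> = real Toff * (\<Sum>a\<in>{a\<in>A. P a}. \<pi> a)"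
    by (simp add: sum.inter_filter[OF A])
  finally show ?thesis .
qed

lemma prod_list_map_if_one:
  "prod_list (map (\<lambda>b. if P b then 1 else \<rho>) xs) = \<rho> ^ length (filter (\<lambda>b. \<not> P b) xs)"
  by (induction xs) auto

section \<open>Assouad's argument on a hypercube of parameters\<close>

definition flip_potential :: "(('c::finite \<Rightarrow> bool) \<Rightarrow> real) \<Rightarrow> 'c \<Rightarrow> real" where
  "flip_potential l i = (\<Sum>\<sigma>\<in>{\<sigma>. \<sigma> i}. parallel_sum (l \<sigma>) (l (\<sigma>(i := False))))"

lemma bij_betw_switch_off: "bij_betw (\<lambda>\<sigma>. \<sigma>(i := False)) {\<sigma>. \<sigma> i} {\<sigma>. \<not> \<sigma> i}"
  by (rule bij_betwI[where g = "\<lambda>\<sigma>. \<sigma>(i := True)"]) (auto simp: fun_eq_iff)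

lemma sum_switch_pairs:
  fixes f :: "('c::finite \<Rightarrow> bool) \<Rightarrow> 'a::comm_monoid_add"
  shows "(\<Sum>\<sigma>\<in>UNIV. f \<sigma>) = (\<Sum>\<sigma>\<in>{\<sigma>. \<sigma> i}. f \<sigma> + f (\<sigma>(i := False)))"
proof -
  have "(\<Sum>\<sigma>\<in>UNIV. f \<sigma>) = (\<Sum>\<sigma>\<in>{\<sigma>. \<sigma> i}. f \<sigma>) + (\<Sum>\<sigma>\<in>{\<sigma>. \<not> \<sigma> i}. f \<sigma>)"
    by (subst sum.union_disjoint[symmetric]) (auto intro: sum.cong)
  also have "(\<Sum>\<sigma>\<in>{\<sigma>. \<not> \<sigma> i}. f \<sigma>) = (\<Sum>\<sigma>\<in>{\<sigma>. \<sigma> i}. f (\<sigma>(i := False)))"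
    by (rule sum.reindex_bij_betw[OF bij_betw_switch_off, symmetric])
  finally show ?thesis by (simp add: sum.distrib)
qed

lemma flip_potential_const_one:
  fixes i :: "'c::finite"
  shows "flip_potential (\<lambda>_. 1) i = real CARD('c \<Rightarrow> bool) / 4"
  using sum_switch_pairs[of "\<lambda>_. 1 :: real" i] by (simp add: flip_potential_def)

lemma flip_potential_le_weighted_sum:
  fixes l :: "('c::finite \<Rightarrow> bool) \<Rightarrow> real" and D :: "'c \<Rightarrow> ('c \<Rightarrow> bool) \<Rightarrow> real"
  assumes D: "\<And>i \<sigma> x y. \<sigma> i \<Longrightarrow> 0 \<le> x \<Longrightarrow> 0 \<le> y \<Longrightarrow> g i * min x y \<le> x * D i \<sigma> + y * D i (\<sigma>(i := False))"
    and g: "\<And>i. 0 \<le> g i" and l: "\<And>\<sigma>. 0 \<le> l \<sigma>"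
  shows "(\<Sum>i\<in>UNIV. g i * flip_potential l i) \<le> (\<Sum>\<sigma>\<in>UNIV. l \<sigma> * (\<Sum>i\<in>UNIV. D i \<sigma>))"
proof -
  have "(\<Sum>i\<in>UNIV. g i * flip_potential l i)
      \<le> (\<Sum>i\<in>UNIV. \<Sum>\<sigma>\<in>{\<sigma>. \<sigma> i}. l \<sigma> * D i \<sigma> + l (\<sigma>(i := False)) * D i (\<sigma>(i := False)))"
    unfolding flip_potential_def sum_distrib_left
  proof (intro sum_mono)
    fix i :: 'c and \<sigma> :: "'c \<Rightarrow> bool"
    assume "\<sigma> \<in> {\<sigma>. \<sigma> i}"
    then have "g i * min (l \<sigma>) (l (\<sigma>(i := False)))
        \<le> l \<sigma> * D i \<sigma> + l (\<sigma>(i := False)) * D i (\<sigma>(i := False))"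
      using D l by simp
    with mult_left_mono[OF parallel_sum_le_min[OF l l] g]
    show "g i * parallel_sum (l \<sigma>) (l (\<sigma>(i := False)))
        \<le> l \<sigma> * D i \<sigma> + l (\<sigma>(i := False)) * D i (\<sigma>(i := False))"
      by (rule order_trans)
  qed
  also have "\<dots> = (\<Sum>i\<in>UNIV. \<Sum>\<sigma>\<in>UNIV. l \<sigma> * D i \<sigma>)"
    by (rule sum.cong[OF refl]) (rule sum_switch_pairs[symmetric])
  also have "\<dots> = (\<Sum>\<sigma>\<in>UNIV. l \<sigma> * (\<Sum>i\<in>UNIV. D i \<sigma>))"
    by (subst sum.swap) (simp add: sum_distrib_left)
  finally show ?thesis .
qed

lemma integrable_flip_potential_normal:
  assumes "\<And>\<sigma>. 0 \<le> lam \<sigma>"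
  shows "integrable lborel (\<lambda>z. flip_potential (\<lambda>\<sigma>. lam \<sigma> * normal_density (\<mu> \<sigma>) 1 z) i)"
  unfolding flip_potential_def using integrable_parallel_sum_normal assms by auto

lemma flip_potential_normal_integral_ge:
  assumes lam: "\<And>\<sigma>. 0 \<le> lam \<sigma>"
    and rho: "\<And>\<sigma>. \<sigma> i \<Longrightarrow> \<rho> \<le> gauss_affinity (\<mu> \<sigma> - \<mu> (\<sigma>(i := False)))"
  shows "\<rho> * flip_potential lam i
           \<le> (\<integral>z. flip_potential (\<lambda>\<sigma>. lam \<sigma> * normal_density (\<mu> \<sigma>) 1 z) i \<partial>lborel)"
proof -
  have "\<rho> * parallel_sum (lam \<sigma>) (lam (\<sigma>(i := False)))
      \<le> (\<integral>z. parallel_sum (lam \<sigma> * normal_density (\<mu> \<sigma>) 1 z)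
                (lam (\<sigma>(i := False)) * normal_density (\<mu> (\<sigma>(i := False))) 1 z) \<partial>lborel)"
    if "\<sigma> i" for \<sigma>
    using mult_right_mono[OF rho[of \<sigma>, OF that] parallel_sum_nonneg[OF lam lam]]
      gauss_affinity_le_integral[OF lam lam]
    by (rule order_trans)
  then show ?thesis
    unfolding flip_potential_def sum_distrib_left
    using integrable_parallel_sum_normal[OF lam lam]
    by (subst Bochner_Integration.integral_sum) (auto intro: sum_mono)
qed

text \<open>The Gaussian likelihoods turn the weights \<open>lam\<close> into the unnormalised posterior weights
  \<open>lam \<sigma> * normal_density (\<mu> \<sigma>) 1 z\<close>; the bound assumed for every weighting is applied to them, and
  integrating over the observation \<open>z\<close> loses at most the affinity factor of the potential.\<close>
lemma weighted_normal_integral_le: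
  fixes E :: "('c::finite \<Rightarrow> bool) \<Rightarrow> real \<Rightarrow> real"
  assumes meas: "\<And>\<sigma>. E \<sigma> \<in> borel_measurable borel" and bounded: "\<And>\<sigma> z. \<bar>E \<sigma> z\<bar> \<le> C"
    and lam: "\<And>\<sigma>. 0 \<le> lam \<sigma>" and c: "\<And>i. 0 \<le> c i"
    and rho: "\<And>\<sigma> i. \<sigma> i \<Longrightarrow> \<rho> i \<le> gauss_affinity (\<mu> \<sigma> - \<mu> (\<sigma>(i := False)))"
    and pointwise: "\<And>z l. (\<And>\<sigma>. 0 \<le> l \<sigma>) \<Longrightarrow>
      (\<Sum>\<sigma>\<in>UNIV. l \<sigma> * E \<sigma> z) \<le> (\<Sum>\<sigma>\<in>UNIV. l \<sigma> * M \<sigma>) - (\<Sum>i\<in>UNIV. c i * flip_potential l i)"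
  shows "(\<Sum>\<sigma>\<in>UNIV. lam \<sigma> * (\<integral>z. normal_density (\<mu> \<sigma>) 1 z * E \<sigma> z \<partial>lborel))
           \<le> (\<Sum>\<sigma>\<in>UNIV. lam \<sigma> * M \<sigma>) - (\<Sum>i\<in>UNIV. c i * \<rho> i * flip_potential lam i)"
proof -
  define post where "post z \<sigma> = lam \<sigma> * normal_density (\<mu> \<sigma>) 1 z" for z \<sigma>
  have post: "0 \<le> post z \<sigma>" for z \<sigma>
    using lam by (simp add: post_def)
  have int_E: "integrable lborel (\<lambda>z. normal_density (\<mu> \<sigma>) 1 z * E \<sigma> z)" for \<sigma>
  proof (rule Bochner_Integration.integrable_bound)
    show "integrable lborel (\<lambda>z. C * normal_density (\<mu> \<sigma>) 1 z)" by simp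
    have "\<bar>E \<sigma> z\<bar> * normal_density (\<mu> \<sigma>) 1 z \<le> \<bar>C\<bar> * normal_density (\<mu> \<sigma>) 1 z" for z
      using bounded[of \<sigma> z] by (intro mult_right_mono) auto
    then show "AE z in lborel. norm (normal_density (\<mu> \<sigma>) 1 z * E \<sigma> z) \<le> norm (C * normal_density (\<mu> \<sigma>) 1 z)"
      by (simp add: abs_mult mult.commute)
  qed (use meas[of \<sigma>] in simp)
  have int_pot: "integrable lborel (\<lambda>z. flip_potential (post z) i)" for i
    unfolding post_def by (rule integrable_flip_potential_normal[OF lam])
  have "(\<Sum>\<sigma>\<in>UNIV. lam \<sigma> * (\<integral>z. normal_density (\<mu> \<sigma>) 1 z * E \<sigma> z \<partial>lborel))
      = (\<integral>z. (\<Sum>\<sigma>\<in>UNIV. post z \<sigma> * E \<sigma> z) \<partial>lborel)"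
    using int_E by (simp add: post_def mult.assoc Bochner_Integration.integral_sum)
  also have "\<dots> \<le> (\<integral>z. (\<Sum>\<sigma>\<in>UNIV. post z \<sigma> * M \<sigma>) - (\<Sum>i\<in>UNIV. c i * flip_potential (post z) i) \<partial>lborel)"
  proof (rule integral_mono)
    fix z
    show "(\<Sum>\<sigma>\<in>UNIV. post z \<sigma> * E \<sigma> z)
        \<le> (\<Sum>\<sigma>\<in>UNIV. post z \<sigma> * M \<sigma>) - (\<Sum>i\<in>UNIV. c i * flip_potential (post z) i)"
      by (rule pointwise[of "post z" z, OF post])
  qed (use int_E int_pot in \<open>auto simp: post_def mult.assoc\<close>)
  also have "\<dots> = (\<Sum>\<sigma>\<in>UNIV. lam \<sigma> * M \<sigma>) - (\<Sum>i\<in>UNIV. c i * (\<integral>z. flip_potential (post z) i \<partial>lborel))"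
    using int_pot by (simp add: post_def Bochner_Integration.integral_sum)
  also have "\<dots> \<le> (\<Sum>\<sigma>\<in>UNIV. lam \<sigma> * M \<sigma>) - (\<Sum>i\<in>UNIV. c i * \<rho> i * flip_potential lam i)"
  proof -
    have "\<rho> i * flip_potential lam i \<le> (\<integral>z. flip_potential (post z) i \<partial>lborel)" for i
      unfolding post_def by (rule flip_potential_normal_integral_ge, rule lam, rule rho)
    then show ?thesis
      using c by (simp add: mult.assoc mult_left_mono sum_mono)
  qed
  finally show ?thesis .
qed

lemma weighted_exp_reward_observation_le:
  fixes th :: "('c::finite \<Rightarrow> bool) \<Rightarrow> 'd::finite arm"
  assumes adm: "admissible S" and A: "finite A" "A \<noteq> {}"
    and c: "\<And>i. 0 \<le> c i"
    and rho: "\<And>\<sigma> i. \<sigma> i \<Longrightarrow> \<rho> i \<le> gauss_affinity (th \<sigma> \<bullet> b - th (\<sigma>(i := False)) \<bullet> b)"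
    and next_round: "\<And>z l. (\<And>\<sigma>. 0 \<le> l \<sigma>) \<Longrightarrow>
      (\<Sum>\<sigma>\<in>UNIV. l \<sigma> * exp_reward S A (th \<sigma>) bs k (h @ [(b, z)]))
        \<le> (\<Sum>\<sigma>\<in>UNIV. l \<sigma> * (real k * max_reward A (th \<sigma>))) - (\<Sum>i\<in>UNIV. c i * flip_potential l i)"
    and l: "\<And>\<sigma>. 0 \<le> l \<sigma>"
  shows "(\<Sum>\<sigma>\<in>UNIV. l \<sigma> * (\<integral>y. exp_reward S A (th \<sigma>) bs k (h @ [(b, th \<sigma> \<bullet> b + y)]) \<partial>noise))
           \<le> (\<Sum>\<sigma>\<in>UNIV. l \<sigma> * (real k * max_reward A (th \<sigma>))) - (\<Sum>i\<in>UNIV. c i * \<rho> i * flip_potential l i)"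
  unfolding exp_reward_observation[OF adm A]
proof (rule weighted_normal_integral_le[where C = "real k * (\<Sum>\<tau>\<in>UNIV. max_abs_reward A (th \<tau>))"])
  fix \<sigma> z
  have "max_abs_reward A (th \<sigma>) \<le> (\<Sum>\<tau>\<in>UNIV. max_abs_reward A (th \<tau>))"
    using max_abs_reward_nonneg[OF A] by (intro member_le_sum) auto
  then show "\<bar>exp_reward S A (th \<sigma>) bs k (h @ [(b, z)])\<bar> \<le> real k * (\<Sum>\<tau>\<in>UNIV. max_abs_reward A (th \<tau>))"
    using abs_exp_reward_le[OF adm A, of "th \<sigma>" bs k] by (meson mult_left_mono of_nat_0_le_iff order_trans)
qed (use admissible_measurable_observation[OF adm A] l c rho next_round in auto)

lemma weighted_exp_reward_online_le:
  fixes th :: "('c::finite \<Rightarrow> bool) \<Rightarrow> 'd::finite arm"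
  assumes adm: "admissible S" and A: "finite A" "A \<noteq> {}"
    and gap: "\<And>a l. a \<in> A \<Longrightarrow> (\<And>\<sigma>. 0 \<le> l \<sigma>) \<Longrightarrow>
      (\<Sum>i\<in>UNIV. g i * flip_potential l i) \<le> (\<Sum>\<sigma>\<in>UNIV. l \<sigma> * (max_reward A (th \<sigma>) - th \<sigma> \<bullet> a))"
    and g: "\<And>i. 0 \<le> g i" and r: "\<And>i. 0 \<le> r i"
    and r_affinity: "\<And>a \<sigma> i. a \<in> A \<Longrightarrow> \<sigma> i \<Longrightarrow> r i \<le> gauss_affinity (th \<sigma> \<bullet> a - th (\<sigma>(i := False)) \<bullet> a)"
    and l: "\<And>\<sigma>. 0 \<le> l \<sigma>"
  shows "(\<Sum>\<sigma>\<in>UNIV. l \<sigma> * exp_reward S A (th \<sigma>) [] k h)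
           \<le> (\<Sum>\<sigma>\<in>UNIV. l \<sigma> * (real k * max_reward A (th \<sigma>)))
              - (\<Sum>i\<in>UNIV. g i * (\<Sum>j<k. r i ^ j) * flip_potential l i)"
  using l
proof (induction k arbitrary: h l)
  case (Suc k)
  let ?J = "\<lambda>a \<sigma>. \<integral>y. exp_reward S A (th \<sigma>) [] k (h @ [(a, th \<sigma> \<bullet> a + y)]) \<partial>noise"
  define bound where "bound = (\<Sum>\<sigma>\<in>UNIV. l \<sigma> * (real (Suc k) * max_reward A (th \<sigma>)))
      - (\<Sum>i\<in>UNIV. g i * (\<Sum>j<Suc k. r i ^ j) * flip_potential l i)"
  have "(\<Sum>\<sigma>\<in>UNIV. l \<sigma> * (th \<sigma> \<bullet> a + ?J a \<sigma>)) \<le> bound" if a: "a \<in> A" for a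
  proof -
    have "(\<Sum>\<sigma>\<in>UNIV. l \<sigma> * ?J a \<sigma>) \<le> (\<Sum>\<sigma>\<in>UNIV. l \<sigma> * (real k * max_reward A (th \<sigma>)))
        - (\<Sum>i\<in>UNIV. g i * (\<Sum>j<k. r i ^ j) * r i * flip_potential l i)"
      using g r Suc.IH Suc.prems r_affinity[OF a]
      by (intro weighted_exp_reward_observation_le[OF adm A]) (auto intro!: mult_nonneg_nonneg sum_nonneg)
    moreover have "(\<Sum>\<sigma>\<in>UNIV. l \<sigma> * (th \<sigma> \<bullet> a))
        \<le> (\<Sum>\<sigma>\<in>UNIV. l \<sigma> * max_reward A (th \<sigma>)) - (\<Sum>i\<in>UNIV. g i * flip_potential l i)"
      using gap[of a l, OF a Suc.prems] by (simp add: right_diff_distrib sum_subtractf)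
    moreover have "(\<Sum>j<Suc k. r i ^ j) = 1 + r i * (\<Sum>j<k. r i ^ j)" for i
      by (subst sum.lessThan_Suc_shift) (simp add: sum_distrib_left)
    ultimately show ?thesis
      by (simp add: bound_def algebra_simps sum.distrib)
  qed
  then have "(\<Sum>a\<in>A. pmf (S A h) a * (\<Sum>\<sigma>\<in>UNIV. l \<sigma> * (th \<sigma> \<bullet> a + ?J a \<sigma>)))
      \<le> (\<Sum>a\<in>A. pmf (S A h) a * bound)"
    by (intro sum_mono mult_left_mono) auto
  also have "\<dots> = bound"
    by (simp add: sum_distrib_right[symmetric] sum_pmf_admissible[OF adm A])
  finally show ?case
    by (simp add: expectation_admissible[OF adm A] bound_def sum_distrib_left sum.swap[of _ UNIV A]
        mult.left_commute)
qed simp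

lemma weighted_exp_reward_le:
  fixes th :: "('c::finite \<Rightarrow> bool) \<Rightarrow> 'd::finite arm"
  assumes adm: "admissible S" and A: "finite A" "A \<noteq> {}"
    and gap: "\<And>a l. a \<in> A \<Longrightarrow> (\<And>\<sigma>. 0 \<le> l \<sigma>) \<Longrightarrow>
      (\<Sum>i\<in>UNIV. g i * flip_potential l i) \<le> (\<Sum>\<sigma>\<in>UNIV. l \<sigma> * (max_reward A (th \<sigma>) - th \<sigma> \<bullet> a))"
    and g: "\<And>i. 0 \<le> g i" and r: "\<And>i. 0 \<le> r i"
    and r_affinity: "\<And>a \<sigma> i. a \<in> A \<Longrightarrow> \<sigma> i \<Longrightarrow> r i \<le> gauss_affinity (th \<sigma> \<bullet> a - th (\<sigma>(i := False)) \<bullet> a)"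
    and q: "\<And>i b. 0 \<le> q i b"
    and q_affinity: "\<And>b \<sigma> i. b \<in> A \<Longrightarrow> \<sigma> i \<Longrightarrow> q i b \<le> gauss_affinity (th \<sigma> \<bullet> b - th (\<sigma>(i := False)) \<bullet> b)"
    and bs: "set bs \<subseteq> A" and l: "\<And>\<sigma>. 0 \<le> l \<sigma>"
  shows "(\<Sum>\<sigma>\<in>UNIV. l \<sigma> * exp_reward S A (th \<sigma>) bs k h)
           \<le> (\<Sum>\<sigma>\<in>UNIV. l \<sigma> * (real k * max_reward A (th \<sigma>)))
              - (\<Sum>i\<in>UNIV. prod_list (map (q i) bs) * g i * (\<Sum>j<k. r i ^ j) * flip_potential l i)"
  using bs l
proof (induction bs arbitrary: h l)
  case Nil
  then show ?case
    using weighted_exp_reward_online_le[OF adm A gap g r r_affinity] by simp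
next
  case (Cons b bs)
  have "(\<Sum>\<sigma>\<in>UNIV. l \<sigma> * exp_reward S A (th \<sigma>) (b # bs) k h)
      \<le> (\<Sum>\<sigma>\<in>UNIV. l \<sigma> * (real k * max_reward A (th \<sigma>)))
         - (\<Sum>i\<in>UNIV. prod_list (map (q i) bs) * g i * (\<Sum>j<k. r i ^ j) * q i b * flip_potential l i)"
    unfolding exp_reward.simps
    using Cons g r q q_affinity[of b]
    by (intro weighted_exp_reward_observation_le[OF adm A])
      (auto intro!: mult_nonneg_nonneg sum_nonneg prod_list_nonneg)
  then show ?case
    by (simp add: algebra_simps)
qed

lemma exists_ge_average:
  fixes f :: "'a \<Rightarrow> real"
  assumes "finite A" "A \<noteq> {}" "x \<le> sum f A"
  shows "\<exists>a\<in>A. x / real (card A) \<le> f a"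
proof (rule ccontr)
  assume "\<not> ?thesis"
  then have "sum f A < (\<Sum>a\<in>A. x / real (card A))"
    using assms by (intro sum_strict_mono) auto
  with assms show False
    by simp
qed

text \<open>Start from uniform weights, whose flip potential is a quarter of the size of the cube, and take
  a parameter with at least the average regret.\<close>
lemma exists_regret_ge_hypercube:
  fixes th :: "('c::finite \<Rightarrow> bool) \<Rightarrow> 'd::finite arm"
  assumes adm: "admissible S" and A: "finite A" "A \<noteq> {}"
    and gap: "\<And>a l. a \<in> A \<Longrightarrow> (\<And>\<sigma>. 0 \<le> l \<sigma>) \<Longrightarrow>
      (\<Sum>i\<in>UNIV. g i * flip_potential l i) \<le> (\<Sum>\<sigma>\<in>UNIV. l \<sigma> * (max_reward A (th \<sigma>) - th \<sigma> \<bullet> a))"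
    and g: "\<And>i. 0 \<le> g i" and r: "\<And>i. 0 \<le> r i"
    and r_affinity: "\<And>a \<sigma> i. a \<in> A \<Longrightarrow> \<sigma> i \<Longrightarrow> r i \<le> gauss_affinity (th \<sigma> \<bullet> a - th (\<sigma>(i := False)) \<bullet> a)"
    and q: "\<And>i b. 0 \<le> q i b"
    and q_affinity: "\<And>b \<sigma> i. b \<in> A \<Longrightarrow> \<sigma> i \<Longrightarrow> q i b \<le> gauss_affinity (th \<sigma> \<bullet> b - th (\<sigma>(i := False)) \<bullet> b)"
  shows "\<exists>\<sigma>. (\<Sum>i\<in>UNIV. prod_list (map (q i) (offline_arms A \<pi> Toff)) * g i * (\<Sum>j<T. r i ^ j)) / 4
           \<le> regret A \<pi> (th \<sigma>) Toff T S"
proof -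
  let ?C = "\<lambda>i. prod_list (map (q i) (offline_arms A \<pi> Toff)) * g i * (\<Sum>j<T. r i ^ j)"
  have "(\<Sum>i\<in>UNIV. ?C i * flip_potential (\<lambda>_. 1) i) \<le> (\<Sum>\<sigma>\<in>UNIV. regret A \<pi> (th \<sigma>) Toff T S)"
    using weighted_exp_reward_le[OF adm A gap g r r_affinity q q_affinity set_offline_arms[OF A(1), of \<pi> Toff],
        where l = "\<lambda>_. 1" and k = T and h = "[]"]
    by (simp add: regret_def max_reward_def sum_subtractf)
  from exists_ge_average[OF finite_class.finite_UNIV UNIV_not_empty this]
  obtain \<sigma> where "(\<Sum>i\<in>UNIV. ?C i * flip_potential (\<lambda>_. 1) i) / real CARD('c \<Rightarrow> bool)
      \<le> regret A \<pi> (th \<sigma>) Toff T S"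
    by blast
  moreover have "(\<Sum>i\<in>UNIV. ?C i * flip_potential (\<lambda>_. 1) i) = (\<Sum>i\<in>UNIV. ?C i) * (real CARD('c \<Rightarrow> bool) / 4)"
    by (simp add: flip_potential_const_one sum_distrib_right)
  moreover have "0 < real CARD('c \<Rightarrow> bool)"
    by simp
  ultimately show ?thesis
    by auto
qed

section \<open>Instances of the class\<close>

lemma mset_map_upt: "mset (map f [0..<n]) = (\<Sum>k<n. {#f k#})"
  by (induction n) (auto simp: lessThan_Suc add.commute)

lemma sorted_eigenvalues_diagonal:
  fixes v :: "nat \<Rightarrow> real"
  assumes idx: "bij_betw idx (UNIV :: 'd::finite set) {..<CARD('d)}"
    and mono: "\<And>i j. i \<le> j \<Longrightarrow> j < CARD('d) \<Longrightarrow> v i \<le> v j"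
  shows "sorted_eigenvalues (\<chi> i j. if i = j then v (idx i) else 0 :: real ^'d^'d) = map v [0..<CARD('d)]"
proof -
  have "proots (char_poly (\<chi> i j. if i = j then v (idx i) else 0 :: real ^'d^'d))
      = proots (\<Prod>i\<in>UNIV. [:- v (idx i), 1:])"
    unfolding char_poly_def by (subst det_diagonal) auto
  also have "\<dots> = (\<Sum>i\<in>UNIV. {#v (idx i)#})"
    by (subst proots_prod) auto
  also have "\<dots> = mset (map v [0..<CARD('d)])"
    unfolding mset_map_upt by (rule sum.reindex_bij_betw[OF idx])
  finally have proots: "proots (char_poly (\<chi> i j. if i = j then v (idx i) else 0 :: real ^'d^'d))
      = mset (map v [0..<CARD('d)])" .
  have "sorted (map v [0..<CARD('d)])"
    unfolding sorted_iff_nth_mono by (auto intro: mono)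
  then show ?thesis
    unfolding sorted_eigenvalues_def proots sorted_list_of_multiset_mset by (rule sorted_sort_id)
qed

lemma in_classI:
  fixes A :: "'d::finite arm set" and v :: "nat \<Rightarrow> real"
  assumes idx: "bij_betw idx (UNIV :: 'd set) {..<CARD('d)}"
    and mono: "\<And>i j. i \<le> j \<Longrightarrow> j < CARD('d) \<Longrightarrow> v i \<le> v j"
    and A: "finite A" "A \<noteq> {}" "card A \<le> (2 * CARD('d)) ^ CARD('d)"
    and \<pi>: "\<And>a. 0 \<le> \<pi> a" "\<And>a. a \<notin> A \<Longrightarrow> \<pi> a = 0" "(\<Sum>a\<in>A. \<pi> a) = 1"
    and cov: "cov_matrix A \<pi> = (\<chi> i j. if i = j then v (idx i) else 0)"
    and norm: "Max ((\<lambda>a. (norm a)\<^sup>2) ` A) = 1"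
  shows "in_class Toff v A \<pi> \<theta>"
  using A \<pi> sorted_eigenvalues_diagonal[of idx v, OF idx mono] unfolding in_class_def cov norm by simp

definition unit_arms :: "'d::finite arm set" where
  "unit_arms = insert 0 (range (\<lambda>j. axis j 1))"

definition unit_design :: "('d::finite \<Rightarrow> real) \<Rightarrow> 'd arm \<Rightarrow> real" where
  "unit_design c a =
     (if a = 0 then 1 - sum c UNIV else if a \<in> unit_arms then (\<Sum>k\<in>UNIV. c k * a $ k) else 0)"

text \<open>\<open>unit \<Rightarrow> bool\<close> is a hypercube with a single bit: the two hypotheses are \<open>\<plusminus>\<epsilon>\<close> times
  the unit vector of coordinate \<open>j\<close>.\<close>
definition unit_param :: "'d::finite \<Rightarrow> real \<Rightarrow> (unit \<Rightarrow> bool) \<Rightarrow> 'd arm" where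
  "unit_param j \<epsilon> \<sigma> = (if \<sigma> () then \<epsilon> else - \<epsilon>) *\<^sub>R axis j 1"

lemma axis_one_nth: "axis j 1 $ k = (if k = j then 1 else 0)"
  by (simp add: axis_def)

lemma finite_unit_arms [simp]: "finite unit_arms"
  by (simp add: unit_arms_def)

lemma unit_arms_ne [simp]: "unit_arms \<noteq> {}"
  by (simp add: unit_arms_def)

lemma unit_arms_coord: "a \<in> unit_arms \<Longrightarrow> a $ k = 0 \<or> a $ k = 1"
  by (auto simp: unit_arms_def axis_def)

lemma sum_unit_arms:
  fixes f :: "'d::finite arm \<Rightarrow> 'b::comm_monoid_add"
  shows "(\<Sum>a\<in>unit_arms. f a) = f 0 + (\<Sum>j\<in>UNIV. f (axis j 1))"
proof -
  have "inj (\<lambda>j::'d. axis j (1::real))"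
    by (auto simp: inj_on_def axis_eq_axis)
  moreover have "0 \<notin> range (\<lambda>j::'d. axis j (1::real))"
    by (auto simp: axis_eq_0_iff)
  ultimately show ?thesis
    by (simp add: unit_arms_def sum.reindex)
qed

lemma unit_design_axis [simp]: "unit_design c (axis j 1) = c j"
proof -
  have "(\<Sum>k\<in>UNIV. c k * axis j 1 $ k) = (\<Sum>k\<in>UNIV. if k = j then c k else 0)"
    by (rule sum.cong) (auto simp: axis_one_nth)
  then show ?thesis
    by (simp add: unit_design_def unit_arms_def axis_eq_0_iff)
qed

lemma unit_design_zero [simp]: "unit_design c 0 = 1 - sum c UNIV"
  by (simp add: unit_design_def)

lemma cov_matrix_unit_design:
  "cov_matrix unit_arms (unit_design c) = (\<chi> i j. if i = j then c i else 0)"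
proof -
  have "(\<Sum>j\<in>UNIV. c j * axis j 1 $ i * axis j 1 $ k) = (if i = k then c i else 0)" for i k
  proof -
    have "(\<Sum>j\<in>UNIV. c j * axis j 1 $ i * axis j 1 $ k) = (\<Sum>j\<in>UNIV. if j = i then (if i = k then c i else 0) else 0)"
      by (rule sum.cong) (auto simp: axis_one_nth)
    then show ?thesis
      by simp
  qed
  then show ?thesis
    by (simp add: cov_matrix_def sum_unit_arms vec_eq_iff)
qed

lemma in_class_unit_arms:
  fixes v :: "nat \<Rightarrow> real"
  assumes idx: "bij_betw idx (UNIV :: 'd::finite set) {..<CARD('d)}"
    and v: "\<forall>i<CARD('d). 0 \<le> v i" "(\<Sum>i<CARD('d). v i) \<le> 1"
    and mono: "\<And>i j. i \<le> j \<Longrightarrow> j < CARD('d) \<Longrightarrow> v i \<le> v j"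
  shows "in_class Toff v (unit_arms :: 'd arm set) (unit_design (\<lambda>j. v (idx j))) \<theta>"
proof (rule in_classI[OF idx mono])
  have v_idx: "0 \<le> v (idx j)" for j
    using v idx by (auto simp: bij_betw_def)
  have sum_v: "(\<Sum>j\<in>UNIV. v (idx j)) = (\<Sum>i<CARD('d). v i)"
    by (rule sum.reindex_bij_betw[OF idx])
  have "card (unit_arms :: 'd arm set) \<le> Suc CARD('d)"
    unfolding unit_arms_def using card_image_le[of UNIV "\<lambda>j::'d. axis j (1::real)"]
    by (simp add: card_insert_if)
  also have "\<dots> \<le> (2 * CARD('d)) ^ 1"
    by simp
  also have "\<dots> \<le> (2 * CARD('d)) ^ CARD('d)"
    by (intro power_increasing) (auto simp: Suc_le_eq)
  finally show "card (unit_arms :: 'd arm set) \<le> (2 * CARD('d)) ^ CARD('d)" .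
  show "0 \<le> unit_design (\<lambda>j. v (idx j)) a" for a
  proof (cases "a \<in> unit_arms")
    case True
    then consider "a = 0" | j where "a = axis j 1"
      by (auto simp: unit_arms_def)
    then show ?thesis
      using v_idx v(2) sum_v by cases auto
  qed (simp add: unit_design_def unit_arms_def)
  show "unit_design (\<lambda>j. v (idx j)) a = 0" if "a \<notin> unit_arms" for a
    using that by (auto simp: unit_design_def unit_arms_def)
  show "(\<Sum>a\<in>unit_arms. unit_design (\<lambda>j. v (idx j)) a) = 1"
    by (simp add: sum_unit_arms)
  show "cov_matrix unit_arms (unit_design (\<lambda>j. v (idx j))) = (\<chi> i j. if i = j then v (idx i) else 0)"
    by (rule cov_matrix_unit_design)
  have "(\<lambda>a. (norm a)\<^sup>2) ` (unit_arms :: 'd arm set) = {0, 1}"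
    unfolding unit_arms_def by (auto simp: image_iff)
  then show "Max ((\<lambda>a. (norm a)\<^sup>2) ` (unit_arms :: 'd arm set)) = 1"
    by simp
qed simp_all

lemma unit_param_inner: "unit_param j \<epsilon> \<sigma> \<bullet> a = (if \<sigma> () then \<epsilon> else - \<epsilon>) * a $ j"
  by (simp add: unit_param_def inner_axis')

lemma max_reward_unit_param:
  assumes "0 < \<epsilon>"
  shows "max_reward unit_arms (unit_param j \<epsilon> \<sigma>) = (if \<sigma> () then \<epsilon> else 0)"
  unfolding max_reward_def
proof (rule Max_eqI)
  show "x \<le> (if \<sigma> () then \<epsilon> else 0)" if "x \<in> (\<lambda>a. unit_param j \<epsilon> \<sigma> \<bullet> a) ` unit_arms" for x
    using that assms by (auto simp: unit_param_inner dest!: unit_arms_coord[of _ j])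
  have "0 \<in> unit_arms" "axis j 1 \<in> unit_arms"
    by (auto simp: unit_arms_def)
  then show "(if \<sigma> () then \<epsilon> else 0) \<in> (\<lambda>a. unit_param j \<epsilon> \<sigma> \<bullet> a) ` unit_arms"
    by (force simp: unit_param_inner)
qed simp

lemma gauss_affinity_unit_param:
  assumes "b \<in> unit_arms" "\<sigma> i"
  shows "(if b $ j = 0 then 1 else gauss_affinity (2 * \<epsilon>))
           \<le> gauss_affinity (unit_param j \<epsilon> \<sigma> \<bullet> b - unit_param j \<epsilon> (\<sigma>(i := False)) \<bullet> b)"
  using unit_arms_coord[OF assms(1), of j] assms(2) by (auto simp: unit_param_inner)

lemma flip_potential_le_gap_unit_arms:
  assumes \<epsilon>: "0 < \<epsilon>" and a: "a \<in> unit_arms" and l: "\<And>\<sigma>. 0 \<le> l \<sigma>"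
  shows "(\<Sum>i\<in>UNIV. \<epsilon> * flip_potential l i)
           \<le> (\<Sum>\<sigma>\<in>UNIV. l \<sigma> * (max_reward unit_arms (unit_param j \<epsilon> \<sigma>) - unit_param j \<epsilon> \<sigma> \<bullet> a))"
proof -
  let ?D = "\<lambda>(_::unit) \<sigma>. max_reward unit_arms (unit_param j \<epsilon> \<sigma>) - unit_param j \<epsilon> \<sigma> \<bullet> a"
  have "(\<Sum>i\<in>UNIV. \<epsilon> * flip_potential l i) \<le> (\<Sum>\<sigma>\<in>UNIV. l \<sigma> * (\<Sum>i\<in>UNIV. ?D i \<sigma>))"
  proof (rule flip_potential_le_weighted_sum[OF _ _ l])
    fix i :: unit and \<sigma> :: "unit \<Rightarrow> bool" and x y :: real
    assume "\<sigma> i" "0 \<le> x" "0 \<le> y"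
    then show "\<epsilon> * min x y \<le> x * ?D i \<sigma> + y * ?D i (\<sigma>(i := False))"
      using unit_arms_coord[OF a, of j] \<epsilon>
      by (auto simp: max_reward_unit_param unit_param_inner min_def)
  qed (use \<epsilon> in simp)
  then show ?thesis
    by (simp add: UNIV_unit)
qed

lemma exists_regret_ge_unit_arms:
  fixes j :: "'d::finite"
  assumes adm: "admissible S" and \<epsilon>: "0 < \<epsilon>"
  shows "\<exists>\<sigma>. \<epsilon> * (\<Sum>i<T. gauss_affinity (2 * \<epsilon>) ^ i)
              * gauss_affinity (2 * \<epsilon>) ^ length (filter (\<lambda>b. b $ j \<noteq> 0) (offline_arms unit_arms \<pi> Toff)) / 4
           \<le> regret unit_arms \<pi> (unit_param j \<epsilon> \<sigma>) Toff T S"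
proof -
  let ?\<rho> = "gauss_affinity (2 * \<epsilon>)"
  have r_affinity: "?\<rho> \<le> gauss_affinity (unit_param j \<epsilon> \<sigma> \<bullet> a - unit_param j \<epsilon> (\<sigma>(i := False)) \<bullet> a)"
    if "a \<in> unit_arms" "\<sigma> i" for a \<sigma> i
    using gauss_affinity_unit_param[of a \<sigma> i j \<epsilon>, OF that] gauss_affinity_le_one[of "2 * \<epsilon>"]
    by (auto split: if_splits)
  have "\<exists>\<sigma>. (\<Sum>i\<in>(UNIV :: unit set). prod_list (map (\<lambda>b. if b $ j = 0 then 1 else ?\<rho>) (offline_arms unit_arms \<pi> Toff))
      * \<epsilon> * (\<Sum>i<T. ?\<rho> ^ i)) / 4 \<le> regret unit_arms \<pi> (unit_param j \<epsilon> \<sigma>) Toff T S"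
    by (rule exists_regret_ge_hypercube[OF adm finite_unit_arms unit_arms_ne flip_potential_le_gap_unit_arms[OF \<epsilon>]
          _ _ r_affinity _ gauss_affinity_unit_param])
      (use \<epsilon> in \<open>simp_all add: gauss_affinity_nonneg\<close>)
  then show ?thesis
    by (simp add: UNIV_unit prod_list_map_if_one mult_ac)
qed

lemma length_filter_offline_unit_arms_le:
  fixes j :: "'d::finite"
  assumes "\<And>a. 0 \<le> unit_design c a"
  shows "real (length (filter (\<lambda>b. b $ j \<noteq> 0) (offline_arms unit_arms (unit_design c) Toff)))
           \<le> real Toff * c j"
proof -
  have "{a \<in> unit_arms. a $ j \<noteq> 0} = {axis j 1}"
    by (auto simp: unit_arms_def axis_one_nth split: if_splits)
  then show ?thesis
    using length_filter_offline_arms_le[where \<pi> = "unit_design c" and P = "\<lambda>b. b $ j \<noteq> 0" and Toff = Toff,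
        OF finite_unit_arms assms]
    by simp
qed

lemma bij_betw_vec_lambda_box: "bij_betw vec_lambda (Pi\<^sub>E UNIV V) {a. \<forall>k. a $ k \<in> V k}"
  by (rule bij_betwI[where g = vec_nth]) (auto simp: PiE_UNIV_domain)

lemma finite_vec_box: "(\<And>k. finite (V k)) \<Longrightarrow> finite {a :: 'a ^ 'd::finite. \<forall>k. a $ k \<in> V k}"
  using bij_betw_finite[OF bij_betw_vec_lambda_box[of V]] by (simp add: finite_PiE)

lemma card_vec_box:
  "(\<And>k. finite (V k)) \<Longrightarrow> card {a :: 'a ^ 'd::finite. \<forall>k. a $ k \<in> V k} = (\<Prod>k\<in>UNIV. card (V k))"
  using bij_betw_same_card[OF bij_betw_vec_lambda_box[of V]] by (simp add: card_PiE)

lemma sum_prod_vec_box: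
  fixes F :: "'d::finite \<Rightarrow> 'a \<Rightarrow> 'b::comm_semiring_1"
  assumes "\<And>k. finite (V k)"
  shows "(\<Sum>a\<in>{a. \<forall>k. a $ k \<in> V k}. \<Prod>k\<in>UNIV. F k (a $ k)) = (\<Prod>k\<in>UNIV. \<Sum>x\<in>V k. F k x)"
proof -
  have "(\<Sum>a\<in>{a. \<forall>k. a $ k \<in> V k}. \<Prod>k\<in>UNIV. F k (a $ k)) = (\<Sum>f\<in>Pi\<^sub>E UNIV V. \<Prod>k\<in>UNIV. F k (f k))"
    by (subst sum.reindex_bij_betw[OF bij_betw_vec_lambda_box, symmetric]) simp
  also have "\<dots> = (\<Prod>k\<in>UNIV. \<Sum>x\<in>V k. F k x)"
    by (rule prod_sum_PiE[symmetric]) (auto simp: assms)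
  finally show ?thesis .
qed

lemma power2_norm_vec_eq_sum: "(norm (a :: real ^ 'd::finite))\<^sup>2 = (\<Sum>k\<in>UNIV. (a $ k)\<^sup>2)"
  unfolding power2_norm_eq_inner by (simp add: inner_vec_def power2_eq_square)

definition box_arms :: "('d::finite \<Rightarrow> real) \<Rightarrow> 'd arm set" where
  "box_arms s = {a. \<forall>k. a $ k \<in> {- s k, 0, s k}}"

definition box_design :: "('d::finite \<Rightarrow> real) \<Rightarrow> ('d \<Rightarrow> real) \<Rightarrow> 'd arm \<Rightarrow> real" where
  "box_design s p a =
     (if a \<in> box_arms s then \<Prod>k\<in>UNIV. if a $ k = 0 then 1 - p k else p k / 2 else 0)"

definition sign_vector :: "('d::finite \<Rightarrow> real) \<Rightarrow> ('d \<Rightarrow> bool) \<Rightarrow> 'd arm" where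
  "sign_vector \<epsilon> \<sigma> = (\<chi> k. if \<sigma> k then \<epsilon> k else - \<epsilon> k)"

lemma finite_box_arms [simp]: "finite (box_arms s)"
  unfolding box_arms_def by (rule finite_vec_box) simp

lemma vec_in_box_arms: "(\<chi> k. if \<sigma> k then s k else - s k) \<in> box_arms s"
  by (simp add: box_arms_def)

lemma box_arms_ne [simp]: "box_arms s \<noteq> {}"
  using vec_in_box_arms[of "\<lambda>_. True" s] by blast

lemma box_arms_coord: "a \<in> box_arms s \<Longrightarrow> a $ k = - s k \<or> a $ k = 0 \<or> a $ k = s k"
  by (auto simp: box_arms_def)

lemma card_box_arms:
  fixes s :: "'d::finite \<Rightarrow> real"
  assumes "\<And>k. 0 < s k"
  shows "card (box_arms s) = 3 ^ CARD('d)"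
proof -
  have "card (box_arms s) = (\<Prod>k\<in>UNIV. card {- s k, 0, s k})"
    unfolding box_arms_def by (rule card_vec_box) simp
  moreover have "card {- s k, 0, s k} = 3" for k
    using assms[of k] by simp
  ultimately show ?thesis
    by simp
qed

lemma sum_box_design_prod:
  fixes s p :: "'d::finite \<Rightarrow> real"
  assumes s: "\<And>k. 0 < s k"
  shows "(\<Sum>a\<in>box_arms s. box_design s p a * (\<Prod>k\<in>UNIV. F k (a $ k)))
           = (\<Prod>k\<in>UNIV. (1 - p k) * F k 0 + p k / 2 * (F k (s k) + F k (- s k)))"
proof -
  have "(\<Sum>a\<in>box_arms s. box_design s p a * (\<Prod>k\<in>UNIV. F k (a $ k)))
      = (\<Sum>a\<in>box_arms s. \<Prod>k\<in>UNIV. (if a $ k = 0 then 1 - p k else p k / 2) * F k (a $ k))"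
    by (rule sum.cong) (auto simp: box_design_def prod.distrib)
  also have "\<dots> = (\<Prod>k\<in>UNIV. \<Sum>x\<in>{- s k, 0, s k}. (if x = 0 then 1 - p k else p k / 2) * F k x)"
    unfolding box_arms_def by (rule sum_prod_vec_box) simp
  also have "\<dots> = (\<Prod>k\<in>UNIV. (1 - p k) * F k 0 + p k / 2 * (F k (s k) + F k (- s k)))"
  proof (rule prod.cong[OF refl])
    fix k
    have "- s k \<noteq> 0" "s k \<noteq> 0" "- s k \<noteq> s k"
      using s[of k] by auto
    then show "(\<Sum>x\<in>{- s k, 0, s k}. (if x = 0 then 1 - p k else p k / 2) * F k x)
        = (1 - p k) * F k 0 + p k / 2 * (F k (s k) + F k (- s k))"
      by (simp add: algebra_simps)
  qed
  finally show ?thesis .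
qed

lemma sum_box_design_coord:
  fixes s p :: "'d::finite \<Rightarrow> real"
  assumes "\<And>k. 0 < s k"
  shows "(\<Sum>a\<in>box_arms s. box_design s p a * G (a $ i)) = (1 - p i) * G 0 + p i / 2 * (G (s i) + G (- s i))"
  using sum_box_design_prod[OF assms, where p = p and F = "\<lambda>k x. if k = i then G x else 1"]
  by (simp add: if_distrib prod.If_cases)

lemma sum_box_design_two_coords:
  fixes s p :: "'d::finite \<Rightarrow> real"
  assumes "\<And>k. 0 < s k" and "i \<noteq> j"
  shows "(\<Sum>a\<in>box_arms s. box_design s p a * (G (a $ i) * H (a $ j)))
           = ((1 - p i) * G 0 + p i / 2 * (G (s i) + G (- s i))) * ((1 - p j) * H 0 + p j / 2 * (H (s j) + H (- s j)))"
  using sum_box_design_prod[OF assms(1), where p = p and F = "\<lambda>k x. if k = i then G x else if k = j then H x else 1"] assms(2)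
  by (simp add: if_distrib prod.If_cases Diff_eq Int_commute)

lemma box_design_nonneg: "(\<And>k. 0 \<le> p k) \<Longrightarrow> (\<And>k. p k \<le> 1) \<Longrightarrow> 0 \<le> box_design s p a"
  by (auto simp: box_design_def intro!: prod_nonneg)

lemma sum_box_design:
  assumes "\<And>k. 0 < s k"
  shows "(\<Sum>a\<in>box_arms s. box_design s p a) = 1"
  using sum_box_design_coord[OF assms, where p = p and G = "\<lambda>_. 1" and i = undefined] by simp

lemma cov_matrix_box_design:
  assumes s: "\<And>k. 0 < s k"
  shows "cov_matrix (box_arms s) (box_design s p) = (\<chi> i j. if i = j then p i * (s i)\<^sup>2 else 0)"
proof -
  have "(\<Sum>a\<in>box_arms s. box_design s p a * a $ i * a $ j) = (if i = j then p i * (s i)\<^sup>2 else 0)" for i j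
    using sum_box_design_coord[OF s, where p = p and G = "\<lambda>x. x * x" and i = i]
      sum_box_design_two_coords[OF s, where p = p and G = id and H = id and i = i and j = j]
    by (cases "i = j") (simp_all add: power2_eq_square mult.assoc)
  then show ?thesis
    by (simp add: cov_matrix_def vec_eq_iff)
qed

lemma max_norm_box_arms:
  assumes "\<And>k. 0 \<le> s k"
  shows "Max ((\<lambda>a. (norm a)\<^sup>2) ` box_arms s) = (\<Sum>k\<in>UNIV. (s k)\<^sup>2)"
proof (rule Max_eqI)
  show "x \<le> (\<Sum>k\<in>UNIV. (s k)\<^sup>2)" if x: "x \<in> (\<lambda>a. (norm a)\<^sup>2) ` box_arms s" for x
  proof -
    obtain a where a: "a \<in> box_arms s" and x: "x = (norm a)\<^sup>2"
      using x by blast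
    have "(a $ k)\<^sup>2 \<le> (s k)\<^sup>2" for k
      using box_arms_coord[OF a, of k] by auto
    then show ?thesis
      unfolding x power2_norm_vec_eq_sum by (rule sum_mono)
  qed
  show "(\<Sum>k\<in>UNIV. (s k)\<^sup>2) \<in> (\<lambda>a. (norm a)\<^sup>2) ` box_arms s"
    using vec_in_box_arms[of "\<lambda>_. True" s] by (force simp: power2_norm_vec_eq_sum)
qed simp

lemma in_class_box_arms:
  fixes v w :: "nat \<Rightarrow> real"
  assumes idx: "bij_betw idx (UNIV :: 'd::finite set) {..<CARD('d)}"
    and mono: "\<And>i j. i \<le> j \<Longrightarrow> j < CARD('d) \<Longrightarrow> v i \<le> v j"
    and v: "\<forall>i<CARD('d). 0 \<le> v i"
    and w: "\<forall>i<CARD('d). 0 < w i \<and> v i \<le> w i" "(\<Sum>i<CARD('d). w i) = 1"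
    and d: "2 \<le> CARD('d)"
  shows "in_class Toff v (box_arms (\<lambda>k. sqrt (w (idx k))))
           (box_design (\<lambda>k. sqrt (w (idx k))) (\<lambda>k. v (idx k) / w (idx k))) \<theta>"
proof -
  define s where "s k = sqrt (w (idx k))" for k
  define p where "p k = v (idx k) / w (idx k)" for k
  have idx_less: "idx k < CARD('d)" for k
    using idx by (auto simp: bij_betw_def)
  have s: "0 < s k" and p: "0 \<le> p k" "p k \<le> 1" and ps: "p k * (s k)\<^sup>2 = v (idx k)" for k
    using v w(1) idx_less[of k] by (auto simp: s_def p_def)
  have "in_class Toff v (box_arms s) (box_design s p) \<theta>"
  proof (rule in_classI[OF idx mono])
    show "card (box_arms s) \<le> (2 * CARD('d)) ^ CARD('d)"
      unfolding card_box_arms[OF s] using d by (intro power_mono) auto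
    show "0 \<le> box_design s p a" for a
      using p by (rule box_design_nonneg)
    show "box_design s p a = 0" if "a \<notin> box_arms s" for a
      using that by (simp add: box_design_def)
    show "(\<Sum>a\<in>box_arms s. box_design s p a) = 1"
      by (rule sum_box_design[OF s])
    show "cov_matrix (box_arms s) (box_design s p) = (\<chi> i j. if i = j then v (idx i) else 0)"
      by (simp add: cov_matrix_box_design[OF s] ps vec_eq_iff)
    have "(\<Sum>k\<in>UNIV. (s k)\<^sup>2) = (\<Sum>i<CARD('d). w i)"
      using w(1) idx_less by (simp add: s_def less_imp_le sum.reindex_bij_betw[OF idx])
    then show "Max ((\<lambda>a. (norm a)\<^sup>2) ` box_arms s) = 1"
      using max_norm_box_arms[of s] s w(2) by (simp add: less_imp_le)
  qed simp_all
  then show ?thesis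
    by (simp add: s_def[abs_def] p_def[abs_def])
qed

lemma sign_vector_inner: "sign_vector \<epsilon> \<sigma> \<bullet> a = (\<Sum>k\<in>UNIV. (if \<sigma> k then \<epsilon> k else - \<epsilon> k) * a $ k)"
  by (simp add: sign_vector_def inner_vec_def)

lemma sign_vector_switch:
  "sign_vector \<epsilon> \<sigma> \<bullet> a - sign_vector \<epsilon> (\<sigma>(i := False)) \<bullet> a = (if \<sigma> i then 2 * \<epsilon> i * a $ i else 0)"
proof -
  have "sign_vector \<epsilon> \<sigma> \<bullet> a - sign_vector \<epsilon> (\<sigma>(i := False)) \<bullet> a
      = (\<Sum>k\<in>UNIV. if k = i then (if \<sigma> i then 2 * \<epsilon> i * a $ i else 0) else 0)"
    unfolding sign_vector_inner sum_subtractf[symmetric] by (rule sum.cong) auto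
  then show ?thesis
    by simp
qed

lemma max_reward_sign_vector:
  assumes s: "\<And>k. 0 < s k" and \<epsilon>: "\<And>k. 0 \<le> \<epsilon> k"
  shows "max_reward (box_arms s) (sign_vector \<epsilon> \<sigma>) = (\<Sum>k\<in>UNIV. \<epsilon> k * s k)"
  unfolding max_reward_def
proof (rule Max_eqI)
  show "x \<le> (\<Sum>k\<in>UNIV. \<epsilon> k * s k)" if x: "x \<in> (\<lambda>a. sign_vector \<epsilon> \<sigma> \<bullet> a) ` box_arms s" for x
  proof -
    obtain a where a: "a \<in> box_arms s" and x: "x = sign_vector \<epsilon> \<sigma> \<bullet> a"
      using x by blast
    have "(if \<sigma> k then \<epsilon> k else - \<epsilon> k) * a $ k \<le> \<epsilon> k * s k" for k
      using box_arms_coord[OF a, of k] \<epsilon>[of k] s[of k] by auto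
    then show ?thesis
      unfolding x sign_vector_inner by (rule sum_mono)
  qed
  have "sign_vector \<epsilon> \<sigma> \<bullet> (\<chi> k. if \<sigma> k then s k else - s k) = (\<Sum>k\<in>UNIV. \<epsilon> k * s k)"
    unfolding sign_vector_inner by (rule sum.cong) auto
  then show "(\<Sum>k\<in>UNIV. \<epsilon> k * s k) \<in> (\<lambda>a. sign_vector \<epsilon> \<sigma> \<bullet> a) ` box_arms s"
    using vec_in_box_arms[of \<sigma> s] by (intro image_eqI) auto
qed simp

lemma gauss_affinity_sign_vector:
  assumes "b \<in> box_arms s" "\<sigma> i"
  shows "(if b $ i = 0 then 1 else gauss_affinity (2 * \<epsilon> i * s i))
           \<le> gauss_affinity (sign_vector \<epsilon> \<sigma> \<bullet> b - sign_vector \<epsilon> (\<sigma>(i := False)) \<bullet> b)"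
  using box_arms_coord[OF assms(1), of i] assms(2) gauss_affinity_minus[of "2 * \<epsilon> i * s i"]
  by (auto simp: sign_vector_switch)

lemma flip_potential_le_gap_box_arms:
  fixes s \<epsilon> :: "'d::finite \<Rightarrow> real"
  assumes s: "\<And>k. 0 < s k" and \<epsilon>: "\<And>k. 0 < \<epsilon> k" and a: "a \<in> box_arms s" and l: "\<And>\<sigma>. 0 \<le> l \<sigma>"
  shows "(\<Sum>i\<in>UNIV. 2 * \<epsilon> i * s i * flip_potential l i)
           \<le> (\<Sum>\<sigma>\<in>UNIV. l \<sigma> * (max_reward (box_arms s) (sign_vector \<epsilon> \<sigma>) - sign_vector \<epsilon> \<sigma> \<bullet> a))"
proof -
  let ?D = "\<lambda>i \<sigma>. \<epsilon> i * s i - (if \<sigma> i then \<epsilon> i else - \<epsilon> i) * a $ i"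
  have "(\<Sum>i\<in>UNIV. 2 * \<epsilon> i * s i * flip_potential l i) \<le> (\<Sum>\<sigma>\<in>UNIV. l \<sigma> * (\<Sum>i\<in>UNIV. ?D i \<sigma>))"
  proof (rule flip_potential_le_weighted_sum[OF _ _ l])
    fix i :: 'd and \<sigma> :: "'d \<Rightarrow> bool" and x y :: real
    assume "\<sigma> i" "0 \<le> x" "0 \<le> y"
    let ?c1 = "\<epsilon> i * s i - \<epsilon> i * a $ i" and ?c2 = "\<epsilon> i * s i + \<epsilon> i * a $ i"
    have "0 \<le> ?c1" "0 \<le> ?c2"
      using box_arms_coord[OF a, of i] \<epsilon>[of i] s[of i] by auto
    then have "min x y * ?c1 \<le> x * ?c1" "min x y * ?c2 \<le> y * ?c2"
      by (simp_all add: mult_right_mono)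
    with \<open>\<sigma> i\<close> show "2 * \<epsilon> i * s i * min x y \<le> x * ?D i \<sigma> + y * ?D i (\<sigma>(i := False))"
      by (simp add: algebra_simps)
  qed (use \<epsilon> s in \<open>simp add: less_imp_le\<close>)
  then show ?thesis
    using \<epsilon> by (simp add: max_reward_sign_vector[OF s] less_imp_le sign_vector_inner sum_subtractf)
qed

lemma exists_regret_ge_box_arms:
  fixes s \<epsilon> :: "'d::finite \<Rightarrow> real"
  assumes adm: "admissible S" and s: "\<And>k. 0 < s k" and \<epsilon>: "\<And>k. 0 < \<epsilon> k"
  shows "\<exists>\<sigma>. (\<Sum>i\<in>UNIV. 2 * \<epsilon> i * s i * (\<Sum>j<T. gauss_affinity (2 * \<epsilon> i * s i) ^ j)
              * gauss_affinity (2 * \<epsilon> i * s i) ^ length (filter (\<lambda>b. b $ i \<noteq> 0) (offline_arms (box_arms s) \<pi> Toff))) / 4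
           \<le> regret (box_arms s) \<pi> (sign_vector \<epsilon> \<sigma>) Toff T S"
proof -
  let ?\<rho> = "\<lambda>i. gauss_affinity (2 * \<epsilon> i * s i)"
  have r_affinity: "?\<rho> i \<le> gauss_affinity (sign_vector \<epsilon> \<sigma> \<bullet> a - sign_vector \<epsilon> (\<sigma>(i := False)) \<bullet> a)"
    if "a \<in> box_arms s" "\<sigma> i" for a \<sigma> i
    using gauss_affinity_sign_vector[of a s \<sigma> i \<epsilon>, OF that] gauss_affinity_le_one[of "2 * \<epsilon> i * s i"]
    by (auto split: if_splits)
  have "\<exists>\<sigma>. (\<Sum>i\<in>UNIV. prod_list (map (\<lambda>b. if b $ i = 0 then 1 else ?\<rho> i) (offline_arms (box_arms s) \<pi> Toff))
      * (2 * \<epsilon> i * s i) * (\<Sum>j<T. ?\<rho> i ^ j)) / 4 \<le> regret (box_arms s) \<pi> (sign_vector \<epsilon> \<sigma>) Toff T S"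
    by (rule exists_regret_ge_hypercube[OF adm finite_box_arms box_arms_ne flip_potential_le_gap_box_arms[OF s \<epsilon>]
          _ _ r_affinity _ gauss_affinity_sign_vector])
      (use \<epsilon> s in \<open>simp_all add: gauss_affinity_nonneg less_imp_le\<close>)
  then show ?thesis
    by (simp add: prod_list_map_if_one mult_ac)
qed

lemma length_filter_offline_box_arms_le:
  fixes s p :: "'d::finite \<Rightarrow> real"
  assumes s: "\<And>k. 0 < s k" and design: "\<And>a. 0 \<le> box_design s p a"
  shows "real (length (filter (\<lambda>b. b $ i \<noteq> 0) (offline_arms (box_arms s) (box_design s p) Toff)))
           \<le> real Toff * p i"
proof -
  have "(\<Sum>a\<in>{a \<in> box_arms s. a $ i \<noteq> 0}. box_design s p a)
      = (\<Sum>a\<in>box_arms s. box_design s p a * (if a $ i \<noteq> 0 then 1 else 0))"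
    by (simp add: sum.inter_filter if_distrib cong: if_cong)
  also have "\<dots> = p i"
    using sum_box_design_coord[OF s, where p = p and G = "\<lambda>x. if x \<noteq> 0 then 1 else 0" and i = i] s[of i]
    by simp
  finally show ?thesis
    using length_filter_offline_arms_le[where A = "box_arms s" and \<pi> = "box_design s p" and P = "\<lambda>b. b $ i \<noteq> 0" and Toff = Toff,
        OF finite_box_arms design]
    by simp
qed

lemma of_nat_mult_power_le_sum_power:
  fixes r :: real
  assumes "0 \<le> r" "r \<le> 1"
  shows "real k * r ^ k \<le> (\<Sum>j<k. r ^ j)"
  using sum_bounded_below[of "{..<k}" "r ^ k" "\<lambda>j. r ^ j"] assms by (simp add: power_decreasing)

text \<open>The gap \<open>\<delta>\<close> is the scale at which \<open>T\<close> online and \<open>X\<close> offline observations cannot yet tell the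
  two hypotheses apart: the product of their affinities stays above \<open>exp (- 1 / 2)\<close>.\<close>
lemma regret_scale_bound:
  fixes T m :: nat and X g :: real
  assumes T: "1 \<le> T" and X: "0 \<le> X" "real m \<le> X"
  defines "\<delta> \<equiv> 1 / (2 * sqrt (real T + X))"
  assumes g: "\<delta> / 2 \<le> g"
  shows "exp (-2) / 8 * (sqrt (real T) / sqrt (1 + X / real T))
           \<le> g * (\<Sum>j<T. gauss_affinity \<delta> ^ j) * gauss_affinity \<delta> ^ m / 4"
proof -
  define N where "N = real T + X"
  have N: "1 \<le> N" using T X by (simp add: N_def)
  have \<delta>_sq: "\<delta>\<^sup>2 = 1 / (4 * N)"
    using N by (simp add: \<delta>_def N_def power2_eq_square real_sqrt_mult[symmetric])
  have aff: "exp (- 2 * \<delta>\<^sup>2) \<le> gauss_affinity \<delta>"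
    using N by (intro exp_le_gauss_affinity) (simp add: \<delta>_sq field_simps)
  have "exp (- 1 / 2) \<le> exp (- 2 * \<delta>\<^sup>2 * (real T + real m))"
    using X N by (simp add: \<delta>_sq N_def field_simps)
  also have "\<dots> = exp (- 2 * \<delta>\<^sup>2) ^ (T + m)"
    by (simp add: exp_of_nat_mult[symmetric] algebra_simps)
  also have "\<dots> \<le> gauss_affinity \<delta> ^ (T + m)"
    using aff by (intro power_mono) auto
  finally have affinities: "exp (- 1 / 2) \<le> gauss_affinity \<delta> ^ T * gauss_affinity \<delta> ^ m"
    by (simp add: power_add)
  have "2 \<le> exp (3 / 2 :: real)"
    using exp_ge_add_one_self[of "3 / 2 :: real"] by simp
  moreover have "exp (- 1 / 2) = exp (3 / 2) * exp (-2 :: real)"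
    by (simp add: exp_add[symmetric])
  ultimately have "exp (-2) / 8 \<le> exp (- 1 / 2) / (16 :: real)"
    by simp
  then have "exp (-2) / 8 * (sqrt (real T) / sqrt (1 + X / real T))
      \<le> \<delta> / 2 * real T * exp (- 1 / 2) / 4"
    using T N by (simp add: \<delta>_def N_def real_sqrt_divide field_simps)
  also have "\<dots> \<le> \<delta> / 2 * real T * (gauss_affinity \<delta> ^ T * gauss_affinity \<delta> ^ m) / 4"
    using affinities X by (intro divide_right_mono mult_left_mono) (simp_all add: \<delta>_def)
  also have "\<dots> = \<delta> / 2 * (real T * gauss_affinity \<delta> ^ T) * gauss_affinity \<delta> ^ m / 4"
    by (simp add: mult_ac)
  also have "\<dots> \<le> \<delta> / 2 * (\<Sum>j<T. gauss_affinity \<delta> ^ j) * gauss_affinity \<delta> ^ m / 4"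
    using N of_nat_mult_power_le_sum_power[OF gauss_affinity_nonneg gauss_affinity_le_one, of T \<delta>]
    by (intro divide_right_mono mult_right_mono mult_left_mono)
      (auto simp: \<delta>_def N_def gauss_affinity_nonneg)
  also have "\<dots> \<le> g * (\<Sum>j<T. gauss_affinity \<delta> ^ j) * gauss_affinity \<delta> ^ m / 4"
    using g by (intro divide_right_mono mult_right_mono) (auto simp: gauss_affinity_nonneg sum_nonneg)
  finally show ?thesis .
qed

lemma regret_unbounded_if_unobserved:
  fixes v :: "nat \<Rightarrow> real" and B :: real
  assumes adm: "admissible S" and T: "1 \<le> T"
    and idx: "bij_betw idx (UNIV :: 'd::finite set) {..<CARD('d)}"
    and v: "\<forall>i<CARD('d). 0 \<le> v i" "(\<Sum>i<CARD('d). v i) \<le> 1"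
    and mono: "\<And>i j. i \<le> j \<Longrightarrow> j < CARD('d) \<Longrightarrow> v i \<le> v j"
    and unobserved: "v (idx j) = 0"
  shows "\<exists>A \<pi> (\<theta> :: 'd arm). in_class Toff v A \<pi> \<theta> \<and> B \<le> regret A \<pi> \<theta> Toff T S"
proof -
  define \<epsilon> where "\<epsilon> = max 1 (4 * B)"
  let ?\<pi> = "unit_design (\<lambda>j. v (idx j))"
  have unit_class: "in_class Toff v unit_arms ?\<pi> \<theta>" for \<theta> :: "'d arm"
    by (rule in_class_unit_arms[OF idx v mono])
  then have "length (filter (\<lambda>b. b $ j \<noteq> 0) (offline_arms unit_arms ?\<pi> Toff)) = 0"
    using length_filter_offline_unit_arms_le[of "\<lambda>j. v (idx j)" j Toff] unobserved
    by (simp add: in_class_def)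
  moreover have "0 < \<epsilon>"
    by (simp add: \<epsilon>_def)
  from exists_regret_ge_unit_arms[OF adm this, where j = j and T = T and Toff = Toff
      and \<pi> = "unit_design (\<lambda>j. v (idx j))"]
  obtain \<sigma> where "\<epsilon> * (\<Sum>i<T. gauss_affinity (2 * \<epsilon>) ^ i)
      * gauss_affinity (2 * \<epsilon>) ^ length (filter (\<lambda>b. b $ j \<noteq> 0) (offline_arms unit_arms ?\<pi> Toff)) / 4
      \<le> regret unit_arms ?\<pi> (unit_param j \<epsilon> \<sigma>) Toff T S"
    by blast
  moreover have "\<epsilon> \<le> \<epsilon> * (\<Sum>i<T. gauss_affinity (2 * \<epsilon>) ^ i)"
    using \<open>0 < \<epsilon>\<close> T member_le_sum[of 0 "{..<T}" "\<lambda>i. gauss_affinity (2 * \<epsilon>) ^ i"]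
    by (simp add: gauss_affinity_nonneg)
  ultimately have "B \<le> regret unit_arms ?\<pi> (unit_param j \<epsilon> \<sigma>) Toff T S"
    by (simp add: \<epsilon>_def)
  then show ?thesis
    using unit_class by (intro exI[of _ unit_arms] exI[of _ ?\<pi>] exI[of _ "unit_param j \<epsilon> \<sigma>"]) (simp add: \<epsilon>_def)
qed

lemma exists_regret_ge_unit_coordinate:
  fixes v :: "nat \<Rightarrow> real"
  assumes adm: "admissible S" and T: "1 \<le> T"
    and idx: "bij_betw idx (UNIV :: 'd::finite set) {..<CARD('d)}"
    and v: "\<forall>i<CARD('d). 0 \<le> v i" "(\<Sum>i<CARD('d). v i) \<le> 1"
    and mono: "\<And>i j. i \<le> j \<Longrightarrow> j < CARD('d) \<Longrightarrow> v i \<le> v j"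
  shows "\<exists>A \<pi> (\<theta> :: 'd arm). in_class Toff v A \<pi> \<theta> \<and>
           exp (-2) / 8 * (sqrt (real T) / sqrt (1 + real Toff * v (idx j) / real T)) \<le> regret A \<pi> \<theta> Toff T S"
proof -
  define X where "X = real Toff * v (idx j)"
  define \<delta> where "\<delta> = 1 / (2 * sqrt (real T + X))"
  let ?\<pi> = "unit_design (\<lambda>j. v (idx j))"
  let ?n = "length (filter (\<lambda>b. b $ j \<noteq> 0) (offline_arms unit_arms ?\<pi> Toff))"
  have unit_class: "in_class Toff v unit_arms ?\<pi> \<theta>" for \<theta> :: "'d arm"
    by (rule in_class_unit_arms[OF idx v mono])
  have X: "0 \<le> X" "real ?n \<le> X"
    using v idx unit_class length_filter_offline_unit_arms_le[of "\<lambda>j. v (idx j)" j Toff]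
    by (auto simp: X_def in_class_def bij_betw_def)
  have "0 < \<delta> / 2"
    using T X by (simp add: \<delta>_def)
  from exists_regret_ge_unit_arms[OF adm this, where j = j and T = T and Toff = Toff and \<pi> = ?\<pi>]
  obtain \<sigma> where "\<delta> / 2 * (\<Sum>i<T. gauss_affinity \<delta> ^ i) * gauss_affinity \<delta> ^ ?n / 4
      \<le> regret unit_arms ?\<pi> (unit_param j (\<delta> / 2) \<sigma>) Toff T S"
    by auto
  moreover have "exp (-2) / 8 * (sqrt (real T) / sqrt (1 + X / real T))
      \<le> \<delta> / 2 * (\<Sum>i<T. gauss_affinity \<delta> ^ i) * gauss_affinity \<delta> ^ ?n / 4"
    unfolding \<delta>_def by (rule regret_scale_bound[OF T X]) simp
  ultimately show ?thesis
    using unit_class by (intro exI[of _ unit_arms] exI[of _ ?\<pi>] exI[of _ "unit_param j (\<delta> / 2) \<sigma>"])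
      (simp add: X_def)
qed

lemma exists_regret_ge_box:
  fixes v w :: "nat \<Rightarrow> real"
  assumes adm: "admissible S" and T: "1 \<le> T"
    and idx: "bij_betw idx (UNIV :: 'd::finite set) {..<CARD('d)}"
    and v: "\<forall>i<CARD('d). 0 \<le> v i"
    and mono: "\<And>i j. i \<le> j \<Longrightarrow> j < CARD('d) \<Longrightarrow> v i \<le> v j"
    and w: "\<forall>i<CARD('d). 0 < w i \<and> v i \<le> w i" "(\<Sum>i<CARD('d). w i) = 1"
    and d: "2 \<le> CARD('d)"
  shows "\<exists>A \<pi> (\<theta> :: 'd arm). in_class Toff v A \<pi> \<theta> \<and>
           sqrt (real T) * exp (-2) / 8 * (\<Sum>i<CARD('d). 1 / sqrt (1 + (real Toff / real T) * (v i / w i)))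
             \<le> regret A \<pi> \<theta> Toff T S"
proof -
  define s where "s k = sqrt (w (idx k))" for k
  define p where "p k = v (idx k) / w (idx k)" for k
  define X where "X k = real Toff * p k" for k
  define \<delta> where "\<delta> k = 1 / (2 * sqrt (real T + X k))" for k
  define \<epsilon> where "\<epsilon> k = \<delta> k / (2 * s k)" for k
  let ?\<pi> = "box_design s p"
  let ?n = "\<lambda>k. length (filter (\<lambda>b. b $ k \<noteq> 0) (offline_arms (box_arms s) ?\<pi> Toff))"
  have idx_less: "idx k < CARD('d)" for k
    using idx by (auto simp: bij_betw_def)
  have s: "0 < s k" and X: "0 \<le> X k" for k
    using v w(1) idx_less[of k] by (auto simp: s_def X_def p_def)
  have \<delta>: "0 < \<delta> k" and \<epsilon>: "0 < \<epsilon> k" and \<epsilon>s: "2 * \<epsilon> k * s k = \<delta> k" for k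
    using T X[of k] s[of k] by (simp_all add: \<delta>_def \<epsilon>_def)
  have box_class: "in_class Toff v (box_arms s) ?\<pi> \<theta>" for \<theta> :: "'d arm"
    unfolding s_def[abs_def] p_def[abs_def] by (rule in_class_box_arms[OF idx mono v w d])
  have n: "real (?n k) \<le> X k" for k
    using length_filter_offline_box_arms_le[OF s, where p = p and i = k and Toff = Toff] box_class by (simp add: X_def in_class_def)
  have "\<exists>\<sigma>. (\<Sum>k\<in>UNIV. \<delta> k * (\<Sum>j<T. gauss_affinity (\<delta> k) ^ j) * gauss_affinity (\<delta> k) ^ ?n k) / 4
      \<le> regret (box_arms s) ?\<pi> (sign_vector \<epsilon> \<sigma>) Toff T S"
    using exists_regret_ge_box_arms[where s = s and \<epsilon> = \<epsilon> and T = T and \<pi> = ?\<pi> and Toff = Toff, OF adm s \<epsilon>]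
    by (simp only: \<epsilon>s)
  then obtain \<sigma> where "(\<Sum>k\<in>UNIV. \<delta> k * (\<Sum>j<T. gauss_affinity (\<delta> k) ^ j) * gauss_affinity (\<delta> k) ^ ?n k) / 4
      \<le> regret (box_arms s) ?\<pi> (sign_vector \<epsilon> \<sigma>) Toff T S"
    by blast
  moreover have "exp (-2) / 8 * (sqrt (real T) / sqrt (1 + X k / real T))
      \<le> \<delta> k * (\<Sum>j<T. gauss_affinity (\<delta> k) ^ j) * gauss_affinity (\<delta> k) ^ ?n k / 4" for k
    unfolding \<delta>_def by (rule regret_scale_bound[OF T X n]) (simp add: \<delta>_def[symmetric] \<delta> less_imp_le)
  then have "(\<Sum>k\<in>UNIV. exp (-2) / 8 * (sqrt (real T) / sqrt (1 + X k / real T)))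
      \<le> (\<Sum>k\<in>UNIV. \<delta> k * (\<Sum>j<T. gauss_affinity (\<delta> k) ^ j) * gauss_affinity (\<delta> k) ^ ?n k) / 4"
    unfolding sum_divide_distrib by (rule sum_mono)
  moreover have "(\<Sum>k\<in>UNIV. exp (-2) / 8 * (sqrt (real T) / sqrt (1 + X k / real T)))
      = (\<Sum>i<CARD('d). exp (-2) / 8 * (sqrt (real T) / sqrt (1 + real Toff * (v i / w i) / real T)))"
    unfolding X_def p_def by (rule sum.reindex_bij_betw[OF idx])
  moreover have "\<dots> = sqrt (real T) * exp (-2) / 8 * (\<Sum>i<CARD('d). 1 / sqrt (1 + (real Toff / real T) * (v i / w i)))"
    by (auto simp: sum_distrib_left mult.commute intro!: sum.cong)
  ultimately have "sqrt (real T) * exp (-2) / 8 * (\<Sum>i<CARD('d). 1 / sqrt (1 + (real Toff / real T) * (v i / w i)))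
      \<le> regret (box_arms s) ?\<pi> (sign_vector \<epsilon> \<sigma>) Toff T S"
    by linarith
  with box_class show ?thesis
    by blast
qed

lemma exists_instance_regret_ge:
  fixes v w :: "nat \<Rightarrow> real"
  assumes adm: "admissible S" and T: "0 < T"
    and v: "\<forall>i<CARD('d::finite). 0 \<le> v i \<and> v i \<le> 1" "(\<Sum>i<CARD('d). v i) \<le> 1"
    and mono: "\<forall>i j. i \<le> j \<longrightarrow> j < CARD('d) \<longrightarrow> v i \<le> v j"
    and w: "\<forall>i<CARD('d). 0 \<le> w i \<and> v i \<le> w i" "(\<Sum>i<CARD('d). w i) = 1"
  shows "\<exists>A \<pi> (\<theta> :: 'd arm). in_class Toff v A \<pi> \<theta> \<and>
           sqrt (real T) * exp (-2) / 8 * (\<Sum>i<CARD('d). 1 / sqrt (1 + (real Toff / real T) * (v i / w i)))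
             \<le> regret A \<pi> \<theta> Toff T S"
proof -
  obtain idx :: "'d \<Rightarrow> nat" where idx: "bij_betw idx UNIV {..<CARD('d)}"
    using ex_bij_betw_finite_nat[of "UNIV :: 'd set"] by (auto simp: atLeast0LessThan)
  then obtain j where j: "idx j = 0"
    by (metis bij_betw_iff_bijections lessThan_iff zero_less_card_finite)
  have T': "1 \<le> T" and v': "\<forall>i<CARD('d). 0 \<le> v i"
    using T v by auto
  have mono': "\<And>i j. i \<le> j \<Longrightarrow> j < CARD('d) \<Longrightarrow> v i \<le> v j"
    using mono by blast
  have "0 \<le> v 0" "0 < CARD('d)"
    using v' by simp_all
  then consider "v 0 = 0" | "0 < v 0" "CARD('d) = 1" | "0 < v 0" "2 \<le> CARD('d)"
    by linarith
  then show ?thesis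
  proof cases
    case 1
    then show ?thesis
      using regret_unbounded_if_unobserved[OF adm T' idx v' v(2) mono', where j = j and Toff = Toff
          and B = "sqrt (real T) * exp (-2) / 8 * (\<Sum>i<CARD('d). 1 / sqrt (1 + (real Toff / real T) * (v i / w i)))"]
        j by simp
  next
    case 2
    then show ?thesis
      using exists_regret_ge_unit_coordinate[OF adm T' idx v' v(2) mono', of Toff j] j w(2)
      by (simp add: mult.commute)
  next
    case 3
    have "\<forall>i<CARD('d). 0 < w i \<and> v i \<le> w i"
      using w(1) mono 3(1) by (meson less_le_trans zero_le)
    with 3 show ?thesis
      using exists_regret_ge_box[OF adm T' idx v' mono' _ w(2)] by blast
  qed
qed

lemma exists_dominating_simplex_point:
  fixes v :: "nat \<Rightarrow> real"
  assumes "0 < n" "\<forall>i<n. 0 \<le> v i" "(\<Sum>i<n. v i) \<le> 1"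
  shows "\<exists>w. (\<forall>i<n. 0 \<le> w i \<and> v i \<le> w i) \<and> (\<Sum>i<n. w i) = 1"
proof -
  define w where "w i = v i + (if i = 0 then 1 - (\<Sum>i<n. v i) else 0)" for i
  have "(\<Sum>i<n. w i) = 1"
    using assms(1) by (simp add: w_def sum.distrib)
  moreover have "\<forall>i<n. 0 \<le> w i \<and> v i \<le> w i"
    using assms(2,3) by (auto simp: w_def)
  ultimately show ?thesis
    by blast
qed

lemma ereal_mult_Sup_le:
  fixes F :: "real set" and Y :: ereal
  assumes F: "F \<noteq> {}" and c: "0 < c" and le: "\<And>x. x \<in> F \<Longrightarrow> ereal (c * x) \<le> Y"
  shows "ereal (c * Sup F) \<le> Y"
proof (cases Y)
  case (real y)
  then have "x \<le> y / c" if "x \<in> F" for x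
    using le[OF that] c by (simp add: field_simps mult.commute)
  then have "Sup F \<le> y / c"
    by (rule cSup_least[OF F])
  with c real show ?thesis
    by (simp add: field_simps mult.commute)
next
  case MInf
  with F le show ?thesis
    by force
qed simp

theorem proposition4p9:
  fixes v :: "nat \<Rightarrow> real" and T Toff :: nat
  assumes "T > 0" and "Toff > 0"
    and "\<forall>i < CARD('d). 0 \<le> v i \<and> v i \<le> 1"
    and "(\<Sum>i < CARD('d). v i) \<le> 1"
    and "\<forall>i j. i \<le> j \<longrightarrow> j < CARD('d) \<longrightarrow> v i \<le> v j"
  shows "ereal (sqrt (real T) * exp (-2) / 8 *
           Sup {(\<Sum>i < CARD('d). 1 / sqrt (1 + (real Toff / real T) * (v i / w i))) | w.
                  (\<forall>i < CARD('d). 0 \<le> w i \<and> v i \<le> w i) \<and> (\<Sum>i < CARD('d). w i) = 1})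
         \<le> minimax_regret TYPE('d::finite) v Toff T"
proof -
  let ?F = "{(\<Sum>i < CARD('d). 1 / sqrt (1 + (real Toff / real T) * (v i / w i))) | w.
               (\<forall>i < CARD('d). 0 \<le> w i \<and> v i \<le> w i) \<and> (\<Sum>i < CARD('d). w i) = 1}"
  have "?F \<noteq> {}"
    using exists_dominating_simplex_point[of "CARD('d)" v] assms(3,4) by auto
  have "ereal (sqrt (real T) * exp (-2) / 8 * Sup ?F)
      \<le> (SUP p\<in>{(A, \<pi>, \<theta>). in_class Toff v A \<pi> (\<theta> :: 'd arm)}.
            ereal (regret (fst p) (fst (snd p)) (snd (snd p)) Toff T S))"
    if "admissible S" for S
  proof (rule ereal_mult_Sup_le[OF \<open>?F \<noteq> {}\<close>])
    fix x
    assume "x \<in> ?F"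
    with exists_instance_regret_ge[OF that assms(1,3,4,5)] obtain A \<pi> and \<theta> :: "'d arm"
      where "in_class Toff v A \<pi> \<theta>" "sqrt (real T) * exp (-2) / 8 * x \<le> regret A \<pi> \<theta> Toff T S"
      by blast
    then show "ereal (sqrt (real T) * exp (-2) / 8 * x)
        \<le> (SUP p\<in>{(A, \<pi>, \<theta>). in_class Toff v A \<pi> \<theta>}. ereal (regret (fst p) (fst (snd p)) (snd (snd p)) Toff T S))"
      by (intro SUP_upper2[of "(A, \<pi>, \<theta>)"]) auto
  qed (use assms(1) in simp)
  then show ?thesis
    unfolding minimax_regret_def by (intro INF_greatest) auto
qed

end
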